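(* Let $n>2$, $i\in[n-1]$ and let $w\in S_n$ be such that $ws_i=w_0$, the longest element of $S_n$. If $n$ is odd assume moreover $i\ne\frac{n+1}{2}$. Then the degenerate Schubert variety $X^a_w$ is reducible.
   Context: Notation: $[a,b]=\{a,\dots,b\}$, $[b]=[1,b]$; $S_n$ is the symmetric group with simple reflections $s_i=(i,i+1)$. For $v\in S_n$, $v([k])=\{v(1),\dots,v(k)\}$; for $k$-subsets $I=\{a_1<\dots<a_k\}$, $K=\{b_1<\dots<b_k\}$ of $[n]$, $I\le K$ iff $a_r\le b_r$ for all $r$. $A_n=\mathbb C[p_I:I\subseteq[n],1\le|I|\le n-1]$; for a sequence of distinct elements, $p$ of the sequence is the signed coordinate of its underlying set, $0$ if entries repeat. Plücker relations: for sequences $J=(j_1,\dots,j_e)$, $L=(l_1,\dots,l_d)$ of distinct elements of $[n]$ with $1\le e\le d\le n-1$ and $k\in[e]$, $R^k_{J,L}=p_Jp_L-\sum_{1\le r_1<\dots<r_k\le d}p_{J'}p_{L'}$, with $J'$ obtained from $J$ by replacing $j_t$ by $l_{r_t}$ and $L'$ from $L$ by replacing $l_{r_t}$ by $j_t$. $\mathcal I_{\mathrm{Fl}_n}$ is generated by all $R^k_{J,L}$, and $\mathcal I_v=\mathcal I_{\mathrm{Fl}_n}+(p_I:I\not\le v([|I|]))$ is the ideal of the Schubert variety $X_v$. Weight $\mathbf w_I=\#\{a\in I:|I|\le a\le n-1\}$; $\operatorname{in}_{\mathbf w}(f)$ is the sum of the terms of $f$ of minimal weight (weight of $\prod p_I^{\alpha_I}$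 is $\sum\alpha_I\mathbf w_I$); $\operatorname{in}_{\mathbf w}(\mathcal I)$ is generated by the $\operatorname{in}_{\mathbf w}(f)$, $f\in\mathcal I$. The degenerate Schubert variety is $X^a_v=V(\operatorname{in}_{\mathbf w}(\mathcal I_v))\subseteq\prod_{k=1}^{n-1}\mathbb P(\wedge^k\mathbb C^n)$. *)

theory Defs
  imports Complex_Main "HOL-Library.Poly_Mapping" "HOL-Combinatorics.Permutations"
    "HOL-Combinatorics.Transposition"
begin

text \<open>Polynomials in the Pluecker variables p_I (I a set of naturals), with complex
  coefficients, as finitely supported functions from monomials to coefficients.\<close>

type_synonym pvar = "nat set"
type_synonym pmono = "pvar \<Rightarrow>\<^sub>0 nat"
type_synonym ppoly = "pmono \<Rightarrow>\<^sub>0 complex"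

definition PVar :: "pvar \<Rightarrow> ppoly" where
  "PVar I = Poly_Mapping.single (Poly_Mapping.single I 1) 1"

definition valid_var :: "nat \<Rightarrow> pvar \<Rightarrow> bool" where
  "valid_var n I \<longleftrightarrow> I \<subseteq> {1..n} \<and> 1 \<le> card I \<and> card I \<le> n - 1"

definition A_ring :: "nat \<Rightarrow> ppoly set" where
  "A_ring n = {f. \<forall>m\<in>Poly_Mapping.keys f. \<forall>I\<in>Poly_Mapping.keys m. valid_var n I}"

definition ideal_gen :: "nat \<Rightarrow> ppoly set \<Rightarrow> ppoly set" where
  "ideal_gen n G = {f. \<exists>S c. finite S \<and> S \<subseteq> G \<and> (\<forall>g\<in>S. c g \<in> A_ring n)
                        \<and> f = (\<Sum>g\<in>S. c g * g)}"

definition inversions :: "nat list \<Rightarrow> nat" where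
  "inversions J = card {(a, b). a < b \<and> b < length J \<and> J ! a > J ! b}"

definition pseq :: "nat list \<Rightarrow> ppoly" where
  "pseq J = (if distinct J then (-1) ^ inversions J * PVar (set J) else 0)"

text \<open>Pluecker relation R^k_{J,L}; positions are 0-based, the chosen positions
  r_1 < ... < r_k are given as a strictly increasing list rs.\<close>
definition J_repl :: "nat \<Rightarrow> nat list \<Rightarrow> nat list \<Rightarrow> nat list \<Rightarrow> nat list" where
  "J_repl k J L rs = map (\<lambda>t. L ! (rs ! t)) [0..<k] @ drop k J"

definition L_repl :: "nat \<Rightarrow> nat list \<Rightarrow> nat list \<Rightarrow> nat list \<Rightarrow> nat list" where
  "L_repl k J L rs = fold (\<lambda>t M. M[rs ! t := J ! t]) [0..<k] L"

definition pluecker_rel :: "nat \<Rightarrow> nat list \<Rightarrow> nat list \<Rightarrow> ppoly" where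
  "pluecker_rel k J L = pseq J * pseq L -
     (\<Sum>rs\<in>{rs. sorted_wrt (<) rs \<and> length rs = k \<and> set rs \<subseteq> {..<length L}}.
        pseq (J_repl k J L rs) * pseq (L_repl k J L rs))"

definition pluecker_rels :: "nat \<Rightarrow> ppoly set" where
  "pluecker_rels n = {pluecker_rel k J L | k J L.
      distinct J \<and> distinct L \<and> set J \<subseteq> {1..n} \<and> set L \<subseteq> {1..n} \<and>
      1 \<le> length J \<and> length J \<le> length L \<and> length L \<le> n - 1 \<and>
      k \<in> {1..length J}}"

definition I_Fl :: "nat \<Rightarrow> ppoly set" where
  "I_Fl n = ideal_gen n (pluecker_rels n)"

definition gale_le :: "nat set \<Rightarrow> nat set \<Rightarrow> bool" where
  "gale_le I K \<longleftrightarrow> card I = card K \<and>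
     (\<forall>r < card I. sorted_list_of_set I ! r \<le> sorted_list_of_set K ! r)"

definition I_schubert :: "nat \<Rightarrow> (nat \<Rightarrow> nat) \<Rightarrow> ppoly set" where
  "I_schubert n v = ideal_gen n (pluecker_rels n \<union>
      {PVar I | I. valid_var n I \<and> \<not> gale_le I (v ` {1..card I})})"

definition wt_var :: "nat \<Rightarrow> pvar \<Rightarrow> nat" where
  "wt_var n I = card {a\<in>I. card I \<le> a \<and> a \<le> n - 1}"

definition wt_mono :: "nat \<Rightarrow> pmono \<Rightarrow> nat" where
  "wt_mono n m = (\<Sum>I\<in>Poly_Mapping.keys m. Poly_Mapping.lookup m I * wt_var n I)"

definition in_w :: "nat \<Rightarrow> ppoly \<Rightarrow> ppoly" where
  "in_w n f = (if f = 0 then 0 else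
     (let mw = Min (wt_mono n ` Poly_Mapping.keys f) in
      \<Sum>m\<in>{m\<in>Poly_Mapping.keys f. wt_mono n m = mw}.
         Poly_Mapping.single m (Poly_Mapping.lookup f m)))"

definition in_ideal :: "nat \<Rightarrow> ppoly set \<Rightarrow> ppoly set" where
  "in_ideal n J = ideal_gen n (in_w n ` J)"

definition peval :: "(pvar \<Rightarrow> complex) \<Rightarrow> ppoly \<Rightarrow> complex" where
  "peval x f = (\<Sum>m\<in>Poly_Mapping.keys f. Poly_Mapping.lookup f m *
      (\<Prod>I\<in>Poly_Mapping.keys m. x I ^ Poly_Mapping.lookup m I))"

text \<open>Product of projective spaces P(\<wedge>^k C^n), k=1..n-1, represented by its affine
  cone: points with every k-th block nonzero (coordinates outside A_n set to 0).
  Subsets of it considered below are unions of torus orbits, i.e. correspond exactly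
  to subsets of the product of projective spaces.\<close>
definition cone :: "nat \<Rightarrow> (pvar \<Rightarrow> complex) set" where
  "cone n = {x. (\<forall>I. \<not> valid_var n I \<longrightarrow> x I = 0) \<and>
                (\<forall>k\<in>{1..n-1}. \<exists>I. valid_var n I \<and> card I = k \<and> x I \<noteq> 0)}"

definition zero_set :: "nat \<Rightarrow> ppoly set \<Rightarrow> (pvar \<Rightarrow> complex) set" where
  "zero_set n F = {x\<in>cone n. \<forall>f\<in>F. peval x f = 0}"

text \<open>Multihomogeneous polynomials (same degree in each block of variables in
  every monomial); Zariski closed subsets of the product of projective spaces.\<close>
definition block_deg :: "nat \<Rightarrow> pmono \<Rightarrow> nat" where
  "block_deg k m = (\<Sum>I\<in>{I\<in>Poly_Mapping.keys m. card I = k}. Poly_Mapping.lookup m I)"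

definition multihom :: "nat \<Rightarrow> ppoly \<Rightarrow> bool" where
  "multihom n f \<longleftrightarrow> f \<in> A_ring n \<and> (\<forall>m1\<in>Poly_Mapping.keys f. \<forall>m2\<in>Poly_Mapping.keys f.
      \<forall>k. block_deg k m1 = block_deg k m2)"

definition zariski_closed :: "nat \<Rightarrow> (pvar \<Rightarrow> complex) set \<Rightarrow> bool" where
  "zariski_closed n Z \<longleftrightarrow> (\<exists>F. (\<forall>f\<in>F. multihom n f) \<and> Z = zero_set n F)"

definition reducible :: "nat \<Rightarrow> (pvar \<Rightarrow> complex) set \<Rightarrow> bool" where
  "reducible n X \<longleftrightarrow> (\<exists>Z1 Z2. zariski_closed n Z1 \<and> zariski_closed n Z2 \<and>
       X = Z1 \<union> Z2 \<and> Z1 \<noteq> X \<and> Z2 \<noteq> X)"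

definition degenerate_schubert :: "nat \<Rightarrow> (nat \<Rightarrow> nat) \<Rightarrow> (pvar \<Rightarrow> complex) set" where
  "degenerate_schubert n v = zero_set n (in_ideal n (I_schubert n v))"

definition simple_refl :: "nat \<Rightarrow> nat \<Rightarrow> nat" where
  "simple_refl i = transpose i (Suc i)"

definition w0 :: "nat \<Rightarrow> nat \<Rightarrow> nat" where
  "w0 n = (\<lambda>j. if j \<in> {1..n} then n + 1 - j else j)"

end

(*
  Write M = {n-i+1..n}.  Since w = w0 s_i, w([k]) = {n+1-k..n} for k ~= i, while
  w([i]) = {n-i} \<union> {n-i+2..n}; hence the only Schubert condition of X_w that matters for
  coordinate flags is p_M = 0: every other subset I is Gale-below w([|I|]).

  Choose distinct a, b, c and a sequence S such that in the three-term Pluecker relation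
  p_{aS} p_{bcS} - p_{bS} p_{acS} - p_{cS} p_{abS} the last monomial is divisible by p_M, and
  the first has strictly smaller weight than the second.  Subtracting the last term, which lies
  in I_w, leaves a two-term element whose initial form is a multiple of p_{aS} p_{bcS}.  Hence
  X^a_w is the union of its intersections with p_{aS} = 0 and with p_{bcS} = 0, and both are
  Zariski closed because X^a_w is cut out by multihomogeneous polynomials.  Neither is all of
  X^a_w: a coordinate flag through aS (resp. bcS) whose i-th space is not e_M moves along a
  one-parameter torus orbit inside X_w, so its point with all weights set to 1 lies in X^a_w.
  The triple (a, b, c) is (2, 1, n) for i = 1, (1, i, n) for 2i <= n and (n, i-1, 1) for
  2i >= n+2; the hypothesis on odd n rules out the remaining case 2i = n+1.
*)

theory Submission
  imports Defs "HOL-Computational_Algebra.Polynomial"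
begin

section \<open>Evaluating polynomials in the Pluecker variables\<close>

definition filter_monos :: "(pmono \<Rightarrow> bool) \<Rightarrow> ppoly \<Rightarrow> ppoly" where
  "filter_monos P f =
     (\<Sum>m\<in>{m\<in>Poly_Mapping.keys f. P m}. Poly_Mapping.single m (Poly_Mapping.lookup f m))"

lemma lookup_sum_single:
  fixes c :: "'a \<Rightarrow> 'b::comm_monoid_add"
  assumes "finite A"
  shows "Poly_Mapping.lookup (\<Sum>m\<in>A. Poly_Mapping.single m (c m)) k = (if k \<in> A then c k else 0)"
  using assms by (induction A rule: finite_induct) (auto simp: lookup_add lookup_single when_def)

lemma lookup_filter_monos:
  "Poly_Mapping.lookup (filter_monos P f) m = (if P m then Poly_Mapping.lookup f m else 0)"
  unfolding filter_monos_def by (subst lookup_sum_single) (auto simp: in_keys_iff)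

lemma keys_filter_monos: "Poly_Mapping.keys (filter_monos P f) = {m\<in>Poly_Mapping.keys f. P m}"
  by (auto simp: in_keys_iff lookup_filter_monos split: if_splits)

lemma filter_monos_add: "filter_monos P (f + g) = filter_monos P f + filter_monos P g"
  by (rule poly_mapping_eqI) (simp add: lookup_filter_monos lookup_add)

lemma filter_monos_sum: "filter_monos P (\<Sum>g\<in>S. F g) = (\<Sum>g\<in>S. filter_monos P (F g))"
proof (induction S rule: infinite_finite_induct)
  case (insert x F)
  then show ?case by (simp add: filter_monos_add)
qed (simp_all add: poly_mapping_eqI lookup_filter_monos)

lemma filter_monos_filter_monos: "filter_monos P (filter_monos Q f) = filter_monos (\<lambda>m. P m \<and> Q m) f"
  by (rule poly_mapping_eqI) (simp add: lookup_filter_monos)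

lemma in_w_eq_filter_monos:
  "in_w n f = filter_monos (\<lambda>m. wt_mono n m = Min (wt_mono n ` Poly_Mapping.keys f)) f"
  by (simp add: in_w_def filter_monos_def Let_def)

definition eval_mono :: "(pvar \<Rightarrow> complex) \<Rightarrow> pmono \<Rightarrow> complex" where
  "eval_mono x m = (\<Prod>I\<in>Poly_Mapping.keys m. x I ^ Poly_Mapping.lookup m I)"

lemma peval_eq_sum_eval_mono:
  "peval x f = (\<Sum>m\<in>Poly_Mapping.keys f. Poly_Mapping.lookup f m * eval_mono x m)"
  by (simp add: peval_def eval_mono_def)

lemma peval_eq_sum_superset:
  assumes "finite K" "Poly_Mapping.keys f \<subseteq> K"
  shows "peval x f = (\<Sum>m\<in>K. Poly_Mapping.lookup f m * eval_mono x m)"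
  unfolding peval_eq_sum_eval_mono
  by (rule sum.mono_neutral_left) (use assms in \<open>auto simp: in_keys_iff\<close>)

lemma eval_mono_eq_prod_superset:
  assumes "finite K" "Poly_Mapping.keys m \<subseteq> K"
  shows "eval_mono x m = (\<Prod>I\<in>K. x I ^ Poly_Mapping.lookup m I)"
  unfolding eval_mono_def
  by (rule prod.mono_neutral_left) (use assms in \<open>auto simp: in_keys_iff\<close>)

lemma keys_add_pmono: "Poly_Mapping.keys (a + b :: pmono) = Poly_Mapping.keys a \<union> Poly_Mapping.keys b"
  by (auto simp: in_keys_iff lookup_add)

lemma eval_mono_add: "eval_mono x (a + b) = eval_mono x a * eval_mono x b"
proof -
  let ?K = "Poly_Mapping.keys a \<union> Poly_Mapping.keys b"
  have "eval_mono x (a + b) = (\<Prod>I\<in>?K. x I ^ Poly_Mapping.lookup (a + b) I)"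
    by (rule eval_mono_eq_prod_superset) (auto simp: keys_add_pmono)
  also have "\<dots> = (\<Prod>I\<in>?K. x I ^ Poly_Mapping.lookup a I) * (\<Prod>I\<in>?K. x I ^ Poly_Mapping.lookup b I)"
    by (simp add: lookup_add power_add prod.distrib)
  also have "\<dots> = eval_mono x a * eval_mono x b"
    by (simp add: eval_mono_eq_prod_superset[symmetric])
  finally show ?thesis .
qed

lemma eval_mono_zero [simp]: "eval_mono x 0 = 1"
  by (simp add: eval_mono_def)

lemma peval_add: "peval x (f + g) = peval x f + peval x g"
proof -
  let ?K = "Poly_Mapping.keys f \<union> Poly_Mapping.keys g"
  have "peval x (f + g) = (\<Sum>m\<in>?K. Poly_Mapping.lookup (f + g) m * eval_mono x m)"
    by (rule peval_eq_sum_superset) (use keys_add[of f g] in auto)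
  also have "\<dots> = (\<Sum>m\<in>?K. Poly_Mapping.lookup f m * eval_mono x m) +
                  (\<Sum>m\<in>?K. Poly_Mapping.lookup g m * eval_mono x m)"
    by (simp add: lookup_add distrib_right sum.distrib)
  also have "\<dots> = peval x f + peval x g"
    by (simp add: peval_eq_sum_superset[symmetric])
  finally show ?thesis .
qed

lemma peval_zero [simp]: "peval x 0 = 0"
  by (simp add: peval_def)

lemma peval_sum: "peval x (\<Sum>g\<in>S. F g) = (\<Sum>g\<in>S. peval x (F g))"
  by (induction S rule: infinite_finite_induct) (auto simp: peval_add)

lemma peval_uminus: "peval x (- f) = - peval x f"
  by (simp add: peval_eq_sum_eval_mono sum_negf)

lemma peval_diff: "peval x (f - g) = peval x f - peval x g"
  by (metis diff_conv_add_uminus peval_add peval_uminus)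

lemma peval_single: "peval x (Poly_Mapping.single m c) = c * eval_mono x m"
  by (simp add: peval_eq_sum_eval_mono)

lemma lookup_mult_eq_sum_superset:
  fixes f g :: ppoly
  assumes "finite F" "Poly_Mapping.keys f \<subseteq> F" "finite G" "Poly_Mapping.keys g \<subseteq> G"
  shows "Poly_Mapping.lookup (f * g) k = (\<Sum>l\<in>F. \<Sum>q\<in>G.
      if k = l + q then Poly_Mapping.lookup f l * Poly_Mapping.lookup g q else 0)"
proof -
  have "Poly_Mapping.lookup (f * g) k =
      (\<Sum>l. Poly_Mapping.lookup f l * (\<Sum>q. Poly_Mapping.lookup g q when k = l + q))"
    by (rule lookup_mult)
  also have "\<dots> = (\<Sum>l\<in>F. Poly_Mapping.lookup f l * (\<Sum>q. Poly_Mapping.lookup g q when k = l + q))"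
    by (rule Sum_any.expand_superset) (use assms in \<open>auto simp: in_keys_iff\<close>)
  also have "\<dots> = (\<Sum>l\<in>F. Poly_Mapping.lookup f l * (\<Sum>q\<in>G. Poly_Mapping.lookup g q when k = l + q))"
    by (intro sum.cong refl arg_cong2[where f="(*)"] Sum_any.expand_superset)
      (use assms in \<open>auto simp: in_keys_iff\<close>)
  finally show ?thesis
    by (simp add: sum_distrib_left when_def if_distrib cong: if_cong)
qed

lemma peval_mult: "peval x (f * g) = peval x f * peval x g"
proof -
  let ?F = "Poly_Mapping.keys f" and ?G = "Poly_Mapping.keys g"
  let ?c = "\<lambda>l q. Poly_Mapping.lookup f l * Poly_Mapping.lookup g q"
  define K where "K = (\<lambda>(l, q). l + q) ` (?F \<times> ?G)"
  have "finite K" unfolding K_def by simp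
  have "Poly_Mapping.keys (f * g) \<subseteq> K"
    using keys_mult[of f g] unfolding K_def by force
  then have "peval x (f * g) = (\<Sum>k\<in>K. Poly_Mapping.lookup (f * g) k * eval_mono x k)"
    by (rule peval_eq_sum_superset[OF \<open>finite K\<close>])
  also have "\<dots> = (\<Sum>k\<in>K. \<Sum>l\<in>?F. \<Sum>q\<in>?G. if k = l + q then ?c l q * eval_mono x k else 0)"
  proof -
    have if_times: "(if b then c else 0) * e = (if b then c * e else 0)" for b and c e :: complex
      by simp
    show ?thesis
      unfolding lookup_mult_eq_sum_superset[OF finite_keys order.refl finite_keys order.refl]
      by (simp only: sum_distrib_right if_times)
  qed
  also have "\<dots> = (\<Sum>l\<in>?F. \<Sum>q\<in>?G. \<Sum>k\<in>K. if k = l + q then ?c l q * eval_mono x k else 0)"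
    by (subst sum.swap) (simp add: sum.swap[of _ K])
  also have "\<dots> = (\<Sum>l\<in>?F. \<Sum>q\<in>?G. ?c l q * eval_mono x (l + q))"
    using \<open>finite K\<close> by (intro sum.cong refl) (auto simp: K_def)
  also have "\<dots> = peval x f * peval x g"
    by (simp add: peval_eq_sum_eval_mono eval_mono_add sum_product mult_ac)
  finally show ?thesis .
qed

lemma peval_one [simp]: "peval x 1 = 1"
  by (simp add: peval_eq_sum_eval_mono)

lemma peval_power: "peval x (f ^ k) = peval x f ^ k"
  by (induction k) (simp_all add: peval_mult)

lemma peval_PVar: "peval x (PVar I) = x I"
  by (simp add: PVar_def peval_single eval_mono_def)

definition valid_mono :: "nat \<Rightarrow> pmono \<Rightarrow> bool" where
  "valid_mono n m \<longleftrightarrow> (\<forall>I\<in>Poly_Mapping.keys m. valid_var n I)"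

lemma A_ring_iff: "f \<in> A_ring n \<longleftrightarrow> (\<forall>m\<in>Poly_Mapping.keys f. valid_mono n m)"
  by (simp add: A_ring_def valid_mono_def)

lemma A_ring_zero [simp]: "0 \<in> A_ring n"
  by (simp add: A_ring_iff)

lemma A_ring_single: "valid_mono n m \<Longrightarrow> Poly_Mapping.single m c \<in> A_ring n"
  by (simp add: A_ring_iff)

lemma A_ring_add: "f \<in> A_ring n \<Longrightarrow> g \<in> A_ring n \<Longrightarrow> f + g \<in> A_ring n"
  using keys_add[of f g] by (auto simp: A_ring_iff)

lemma A_ring_sum: "(\<And>x. x \<in> S \<Longrightarrow> F x \<in> A_ring n) \<Longrightarrow> (\<Sum>x\<in>S. F x) \<in> A_ring n"
  by (induction S rule: infinite_finite_induct) (auto intro: A_ring_add)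

lemma A_ring_uminus: "f \<in> A_ring n \<Longrightarrow> - f \<in> A_ring n"
  by (simp add: A_ring_iff)

lemma A_ring_mult: "f \<in> A_ring n \<Longrightarrow> g \<in> A_ring n \<Longrightarrow> f * g \<in> A_ring n"
  using keys_mult[of f g] by (fastforce simp: A_ring_iff valid_mono_def keys_add_pmono)

lemma A_ring_filter_monos: "f \<in> A_ring n \<Longrightarrow> filter_monos P f \<in> A_ring n"
  by (simp add: A_ring_iff keys_filter_monos)

lemma A_ring_PVar: "valid_var n I \<Longrightarrow> PVar I \<in> A_ring n"
  by (simp add: PVar_def A_ring_single valid_mono_def)

lemma ideal_genI:
  assumes "finite S" "S \<subseteq> G" "\<And>g. g \<in> S \<Longrightarrow> c g \<in> A_ring n" "f = (\<Sum>g\<in>S. c g * g)"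
  shows "f \<in> ideal_gen n G"
  unfolding ideal_gen_def using assms by blast

lemma ideal_genE:
  assumes "f \<in> ideal_gen n G"
  obtains S c where "finite S" "S \<subseteq> G" "\<forall>g\<in>S. c g \<in> A_ring n" "f = (\<Sum>g\<in>S. c g * g)"
  using assms unfolding ideal_gen_def by blast

lemma ideal_gen_generator: "g \<in> G \<Longrightarrow> g \<in> ideal_gen n G"
  by (rule ideal_genI[where S="{g}" and c="\<lambda>_. 1"]) (auto simp: A_ring_iff valid_mono_def)

lemma ideal_gen_add:
  assumes "f1 \<in> ideal_gen n G" "f2 \<in> ideal_gen n G"
  shows "f1 + f2 \<in> ideal_gen n G"
proof -
  obtain S1 c1 where 1: "finite S1" "S1 \<subseteq> G" "\<forall>g\<in>S1. c1 g \<in> A_ring n" "f1 = (\<Sum>g\<in>S1. c1 g * g)"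
    using assms(1) by (rule ideal_genE)
  obtain S2 c2 where 2: "finite S2" "S2 \<subseteq> G" "\<forall>g\<in>S2. c2 g \<in> A_ring n" "f2 = (\<Sum>g\<in>S2. c2 g * g)"
    using assms(2) by (rule ideal_genE)
  define c where "c g = (if g \<in> S1 then c1 g else 0) + (if g \<in> S2 then c2 g else 0)" for g
  have restrict: "(\<Sum>g\<in>S1 \<union> S2. (if g \<in> T then d g else 0) * g) = (\<Sum>g\<in>T. d g * g)"
    if "T \<subseteq> S1 \<union> S2" for T d
  proof -
    have "(\<Sum>g\<in>S1 \<union> S2. (if g \<in> T then d g else 0) * g) = (\<Sum>g\<in>T. (if g \<in> T then d g else 0) * g)"
      by (rule sum.mono_neutral_right) (use 1(1) 2(1) that in auto)
    then show ?thesis by simp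
  qed
  have "f1 + f2 = (\<Sum>g\<in>S1 \<union> S2. c g * g)"
    using 1(4) 2(4) by (simp add: c_def distrib_right sum.distrib restrict)
  moreover have "\<forall>g\<in>S1 \<union> S2. c g \<in> A_ring n"
    using 1 2 by (auto simp: c_def intro!: A_ring_add)
  ultimately show ?thesis
    using 1 2 by (intro ideal_genI[where S="S1 \<union> S2" and c=c]) auto
qed

lemma ideal_gen_mult_left:
  assumes "a \<in> A_ring n" "f \<in> ideal_gen n G"
  shows "a * f \<in> ideal_gen n G"
proof -
  obtain S c where 1: "finite S" "S \<subseteq> G" "\<forall>g\<in>S. c g \<in> A_ring n" "f = (\<Sum>g\<in>S. c g * g)"
    using assms(2) by (rule ideal_genE)
  have "a * f = (\<Sum>g\<in>S. (a * c g) * g)"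
    by (simp add: 1(4) sum_distrib_left mult.assoc)
  moreover have "\<forall>g\<in>S. a * c g \<in> A_ring n"
    using 1(3) A_ring_mult[OF assms(1)] by simp
  ultimately show ?thesis
    using 1(1,2) by (intro ideal_genI[where S=S and c="\<lambda>g. a * c g"]) auto
qed

lemma ideal_gen_diff:
  assumes "f \<in> ideal_gen n G" "g \<in> ideal_gen n G"
  shows "f - g \<in> ideal_gen n G"
proof -
  have "1 \<in> A_ring n" by (simp add: A_ring_iff valid_mono_def)
  then have "-1 \<in> A_ring n" by (rule A_ring_uminus)
  from ideal_gen_mult_left[OF this assms(2)] have "- g \<in> ideal_gen n G" by simp
  then show ?thesis unfolding diff_conv_add_uminus by (rule ideal_gen_add[OF assms(1)])
qed

lemma peval_ideal_gen:
  assumes "f \<in> ideal_gen n G" "\<And>g. g \<in> G \<Longrightarrow> peval x g = 0"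
  shows "peval x f = 0"
proof -
  obtain S c where "finite S" "S \<subseteq> G" "\<forall>g\<in>S. c g \<in> A_ring n" "f = (\<Sum>g\<in>S. c g * g)"
    using assms(1) by (rule ideal_genE)
  then show ?thesis using assms(2) by (auto simp: peval_sum peval_mult intro!: sum.neutral)
qed

lemma ideal_gen_subset_A_ring:
  assumes "f \<in> ideal_gen n G" "G \<subseteq> A_ring n"
  shows "f \<in> A_ring n"
proof -
  obtain S c where "finite S" "S \<subseteq> G" "\<forall>g\<in>S. c g \<in> A_ring n" "f = (\<Sum>g\<in>S. c g * g)"
    using assms(1) by (rule ideal_genE)
  then show ?thesis using assms(2) by (auto intro!: A_ring_sum A_ring_mult)
qed

section \<open>Multihomogeneous components\<close>

definition has_multideg :: "(nat \<Rightarrow> nat) \<Rightarrow> pmono \<Rightarrow> bool" where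
  "has_multideg d m \<longleftrightarrow> (\<forall>k. block_deg k m = d k)"

lemma block_deg_add: "block_deg k (a + b) = block_deg k a + block_deg k b"
proof -
  let ?K = "{I \<in> Poly_Mapping.keys a \<union> Poly_Mapping.keys b. card I = k}"
  have "block_deg k (a + b) = (\<Sum>I\<in>?K. Poly_Mapping.lookup (a + b) I)"
    unfolding block_deg_def by (rule sum.cong) (auto simp: keys_add_pmono)
  also have "\<dots> = (\<Sum>I\<in>?K. Poly_Mapping.lookup a I) + (\<Sum>I\<in>?K. Poly_Mapping.lookup b I)"
    by (simp add: lookup_add sum.distrib)
  also have "(\<Sum>I\<in>?K. Poly_Mapping.lookup a I) = block_deg k a"
    unfolding block_deg_def by (rule sum.mono_neutral_right) (auto simp: in_keys_iff)
  also have "(\<Sum>I\<in>?K. Poly_Mapping.lookup b I) = block_deg k b"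
    unfolding block_deg_def by (rule sum.mono_neutral_right) (auto simp: in_keys_iff)
  finally show ?thesis .
qed

lemma filter_multideg_mult:
  assumes "\<forall>q\<in>Poly_Mapping.keys g. has_multideg e q"
  shows "filter_monos (has_multideg d) (c * g) =
         filter_monos (\<lambda>m. \<forall>k. block_deg k m + e k = d k) c * g"
proof (rule poly_mapping_eqI)
  fix m
  let ?P = "\<lambda>m. \<forall>k. block_deg k m + e k = d k"
  let ?C = "Poly_Mapping.keys c" and ?G = "Poly_Mapping.keys g"
  have deg_sum: "has_multideg d (l + q) \<longleftrightarrow> ?P l" if "q \<in> ?G" for l q
    using assms that by (auto simp: has_multideg_def block_deg_add)
  have "Poly_Mapping.lookup (filter_monos ?P c * g) m = (\<Sum>l\<in>?C. \<Sum>q\<in>?G.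
      if m = l + q then Poly_Mapping.lookup (filter_monos ?P c) l * Poly_Mapping.lookup g q else 0)"
    by (rule lookup_mult_eq_sum_superset) (auto simp: keys_filter_monos)
  also have "\<dots> = (\<Sum>l\<in>?C. \<Sum>q\<in>?G. if has_multideg d m then
      (if m = l + q then Poly_Mapping.lookup c l * Poly_Mapping.lookup g q else 0) else 0)"
    by (intro sum.cong refl) (auto simp: lookup_filter_monos deg_sum)
  also have "\<dots> = Poly_Mapping.lookup (filter_monos (has_multideg d) (c * g)) m"
    by (simp add: lookup_filter_monos
        lookup_mult_eq_sum_superset[OF finite_keys order.refl finite_keys order.refl])
  finally show "Poly_Mapping.lookup (filter_monos (has_multideg d) (c * g)) m =
      Poly_Mapping.lookup (filter_monos ?P c * g) m" by simp
qed

lemma multihom_obtains_multideg: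
  assumes "multihom n g"
  obtains e where "\<forall>q\<in>Poly_Mapping.keys g. has_multideg e q"
proof (cases "Poly_Mapping.keys g = {}")
  case True
  then show ?thesis using that by simp
next
  case False
  then obtain m0 where "m0 \<in> Poly_Mapping.keys g" by blast
  with assms have "\<forall>q\<in>Poly_Mapping.keys g. has_multideg (\<lambda>k. block_deg k m0) q"
    unfolding multihom_def has_multideg_def by metis
  then show ?thesis using that by blast
qed

lemma ideal_gen_filter_multideg:
  assumes "\<And>g. g \<in> G \<Longrightarrow> multihom n g" "f \<in> ideal_gen n G"
  shows "filter_monos (has_multideg d) f \<in> ideal_gen n G"
proof -
  obtain S c where S: "finite S" "S \<subseteq> G" "\<forall>g\<in>S. c g \<in> A_ring n" "f = (\<Sum>g\<in>S. c g * g)"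
    using assms(2) by (rule ideal_genE)
  define e :: "ppoly \<Rightarrow> nat \<Rightarrow> nat" where "e g = (SOME e. \<forall>q\<in>Poly_Mapping.keys g. has_multideg e q)" for g
  have deg_e: "\<forall>q\<in>Poly_Mapping.keys g. has_multideg (e g) q" if "g \<in> S" for g
  proof -
    have "multihom n g" using assms(1) S(2) that by blast
    then obtain e' where "\<forall>q\<in>Poly_Mapping.keys g. has_multideg e' q"
      by (rule multihom_obtains_multideg)
    then show ?thesis unfolding e_def by (rule someI[of _ e'])
  qed
  define c' where "c' g = filter_monos (\<lambda>m. \<forall>k. block_deg k m + e g k = d k) (c g)" for g
  have "filter_monos (has_multideg d) f = (\<Sum>g\<in>S. c' g * g)"
    unfolding S(4) filter_monos_sum c'_def by (intro sum.cong refl filter_multideg_mult deg_e)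
  then show ?thesis
    using S by (intro ideal_genI[where S=S and c=c']) (auto simp: c'_def intro: A_ring_filter_monos)
qed

lemma sum_filter_multideg:
  "f = (\<Sum>d\<in>(\<lambda>m k. block_deg k m) ` Poly_Mapping.keys f. filter_monos (has_multideg d) f)"
proof (rule poly_mapping_eqI)
  fix m
  let ?D = "(\<lambda>m k. block_deg k m) ` Poly_Mapping.keys f"
  have "Poly_Mapping.lookup (\<Sum>d\<in>?D. filter_monos (has_multideg d) f) m
      = (\<Sum>d\<in>?D. if d = (\<lambda>k. block_deg k m) then Poly_Mapping.lookup f m else 0)"
    by (simp add: lookup_sum lookup_filter_monos has_multideg_def fun_eq_iff eq_commute)
  also have "\<dots> = Poly_Mapping.lookup f m"
    by (auto simp: in_keys_iff)
  finally show "Poly_Mapping.lookup f m = Poly_Mapping.lookup (\<Sum>d\<in>?D. filter_monos (has_multideg d) f) m"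
    by simp
qed

lemma filter_multideg_in_w:
  assumes "m0 \<in> Poly_Mapping.keys (in_w n f)" "has_multideg d m0"
  shows "filter_monos (has_multideg d) (in_w n f) = in_w n (filter_monos (has_multideg d) f)"
proof -
  define mw where "mw = Min (wt_mono n ` Poly_Mapping.keys f)"
  define fd where "fd = filter_monos (has_multideg d) f"
  have m0: "m0 \<in> Poly_Mapping.keys fd" "wt_mono n m0 = mw"
    using assms by (auto simp: in_w_eq_filter_monos keys_filter_monos mw_def fd_def)
  have "Min (wt_mono n ` Poly_Mapping.keys fd) = mw"
  proof (rule antisym)
    show "Min (wt_mono n ` Poly_Mapping.keys fd) \<le> mw"
      using m0 by (intro Min_le) auto
    show "mw \<le> Min (wt_mono n ` Poly_Mapping.keys fd)"
      using m0 unfolding mw_def fd_def keys_filter_monos by (intro Min.boundedI) auto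
  qed
  then show ?thesis
    by (simp add: in_w_eq_filter_monos filter_monos_filter_monos fd_def mw_def conj_commute)
qed

lemma multihom_filter_multideg:
  assumes "f \<in> A_ring n"
  shows "multihom n (filter_monos (has_multideg d) f)"
  using assms unfolding multihom_def
  by (auto simp: keys_filter_monos has_multideg_def intro: A_ring_filter_monos)

lemma peval_in_ideal_if_multihom_vanish:
  assumes gens: "\<And>g. g \<in> G \<Longrightarrow> multihom n g"
    and vanish: "\<And>h. h \<in> in_ideal n (ideal_gen n G) \<Longrightarrow> multihom n h \<Longrightarrow> peval x h = 0"
    and h: "h \<in> in_ideal n (ideal_gen n G)"
  shows "peval x h = 0"
  using h unfolding in_ideal_def
proof (rule peval_ideal_gen)
  fix g assume "g \<in> in_w n ` ideal_gen n G"
  then obtain f where f: "f \<in> ideal_gen n G" and g: "g = in_w n f" by blast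
  have "f \<in> A_ring n"
    using f by (rule ideal_gen_subset_A_ring) (auto simp: multihom_def dest: gens)
  have "peval x (filter_monos (has_multideg d) g) = 0"
    if "d \<in> (\<lambda>m k. block_deg k m) ` Poly_Mapping.keys g" for d
  proof -
    from that obtain m0 where "m0 \<in> Poly_Mapping.keys g" "d = (\<lambda>k. block_deg k m0)"
      by blast
    then have "m0 \<in> Poly_Mapping.keys g" "has_multideg d m0"
      by (simp_all add: has_multideg_def)
    then have eq: "filter_monos (has_multideg d) g = in_w n (filter_monos (has_multideg d) f)"
      unfolding g by (rule filter_multideg_in_w)
    show ?thesis
      unfolding eq
    proof (rule vanish)
      show "in_w n (filter_monos (has_multideg d) f) \<in> in_ideal n (ideal_gen n G)"
        unfolding in_ideal_def
        by (intro ideal_gen_generator imageI ideal_gen_filter_multideg[OF gens f])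
      show "multihom n (in_w n (filter_monos (has_multideg d) f))"
        unfolding eq[symmetric] unfolding g in_w_eq_filter_monos
        by (intro multihom_filter_multideg A_ring_filter_monos \<open>f \<in> A_ring n\<close>)
    qed
  qed
  then show "peval x g = 0"
    using arg_cong[OF sum_filter_multideg[of g], of "peval x"] by (simp add: peval_sum)
qed

section \<open>Signs of rearranged sequences\<close>

definition list_sign :: "nat list \<Rightarrow> complex" where
  "list_sign zs = (-1) ^ inversions zs"

definition index_pairs :: "nat \<Rightarrow> (nat \<times> nat) set" where
  "index_pairs m = {(a, b). a < b \<and> b < m}"

definition pair_sign :: "nat list \<Rightarrow> nat \<Rightarrow> nat \<Rightarrow> complex" where
  "pair_sign zs a b = (if zs ! a > zs ! b then -1 else 1)"

definition order_sign :: "nat \<Rightarrow> nat \<Rightarrow> complex" where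
  "order_sign u v = (if u < v then 1 else -1)"

lemma finite_index_pairs [simp]: "finite (index_pairs m)"
  by (rule finite_subset[of _ "{..<m} \<times> {..<m}"]) (auto simp: index_pairs_def)

lemma list_sign_sq: "list_sign zs * list_sign zs = 1"
  by (simp add: list_sign_def power_mult_distrib[symmetric])

lemma list_sign_nonzero: "list_sign zs \<noteq> 0"
  by (simp add: list_sign_def)

lemma prod_pair_sign_sq:
  "(\<Prod>p\<in>T. pair_sign zs (fst p) (snd p)) * (\<Prod>p\<in>T. pair_sign zs (fst p) (snd p)) = 1"
proof -
  have "pair_sign zs a b * pair_sign zs a b = 1" for a b
    by (simp add: pair_sign_def)
  then show ?thesis by (simp add: prod.distrib[symmetric])
qed

lemma list_sign_eq_prod_pair_sign:
  "list_sign zs = (\<Prod>p\<in>index_pairs (length zs). pair_sign zs (fst p) (snd p))"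
proof -
  let ?T = "index_pairs (length zs)" and ?inv = "{p. zs ! fst p > zs ! snd p}"
  have "inversions zs = card (?T \<inter> ?inv)"
    unfolding inversions_def index_pairs_def by (rule arg_cong[where f=card]) auto
  moreover have "(\<Prod>p\<in>?T. pair_sign zs (fst p) (snd p)) = (\<Prod>p\<in>?T \<inter> ?inv. -1) * (\<Prod>p\<in>?T \<inter> - ?inv. 1)"
    unfolding pair_sign_def by (rule prod.If_cases) simp
  ultimately show ?thesis by (simp add: list_sign_def)
qed

lemma prod_pair_sign_mixed:
  assumes "distinct zs" "length zs = m" "P \<subseteq> {..<m}"
  defines "Q \<equiv> {..<m} - P"
  shows "(\<Prod>p\<in>index_pairs m - P \<times> P - Q \<times> Q. pair_sign zs (fst p) (snd p)) =
         (\<Prod>q\<in>Q. \<Prod>p\<in>P. order_sign p q * order_sign (zs ! p) (zs ! q))"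
proof -
  let ?A = "(P \<times> Q) \<inter> {p. fst p < snd p}" and ?B = "(P \<times> Q) \<inter> - {p. fst p < snd p}"
  let ?s = "\<lambda>a b. pair_sign zs a b"
  have fin: "finite (P \<times> Q)" using assms(3) by (auto simp: Q_def intro: finite_subset)
  have "p \<in> index_pairs m - P \<times> P - Q \<times> Q \<longleftrightarrow> p \<in> ?A \<union> prod.swap ` ?B" for p
    using assms(3) by (cases p) (auto simp: index_pairs_def Q_def; metis linorder_neqE_nat)
  then have mixed: "index_pairs m - P \<times> P - Q \<times> Q = ?A \<union> prod.swap ` ?B"
    by blast
  have swap_B: "(\<Prod>p\<in>prod.swap ` ?B. ?s (fst p) (snd p)) = (\<Prod>p\<in>?B. ?s (snd p) (fst p))"
    by (subst prod.reindex) (auto simp: inj_on_def)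
  have "(\<Prod>p\<in>?A \<union> prod.swap ` ?B. ?s (fst p) (snd p)) =
        (\<Prod>p\<in>?A. ?s (fst p) (snd p)) * (\<Prod>p\<in>?B. ?s (snd p) (fst p))"
    unfolding swap_B[symmetric] using fin by (intro prod.union_disjoint) (auto simp: Q_def)
  also have "\<dots> = (\<Prod>p\<in>P \<times> Q. if fst p < snd p then ?s (fst p) (snd p) else ?s (snd p) (fst p))"
    by (rule prod.If_cases[OF fin, symmetric])
  also have "\<dots> = (\<Prod>p\<in>P \<times> Q. order_sign (fst p) (snd p) * order_sign (zs ! fst p) (zs ! snd p))"
  proof (rule prod.cong[OF refl])
    fix p assume p: "p \<in> P \<times> Q"
    then have "fst p \<noteq> snd p" "fst p < m" "snd p < m" using assms(3) by (auto simp: Q_def)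
    moreover from this have "zs ! fst p \<noteq> zs ! snd p"
      using assms(1,2) by (simp add: nth_eq_iff_index_eq)
    ultimately show "(if fst p < snd p then ?s (fst p) (snd p) else ?s (snd p) (fst p)) =
        order_sign (fst p) (snd p) * order_sign (zs ! fst p) (zs ! snd p)"
      by (auto simp: order_sign_def pair_sign_def)
  qed
  also have "\<dots> = (\<Prod>q\<in>Q. \<Prod>p\<in>P. order_sign p q * order_sign (zs ! p) (zs ! q))"
    by (subst prod.swap) (simp add: prod.cartesian_product case_prod_beta')
  finally show ?thesis unfolding mixed .
qed

text \<open>Permuting the entries at the positions in \<open>P\<close> does not change their relative order with
  the remaining entries, so only pairs inside \<open>P\<close> contribute.\<close>

lemma list_sign_mult_eq_prod_block:
  assumes len: "length xs = m" "length ys = m" and dist: "distinct xs" "distinct ys"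
    and P: "P \<subseteq> {..<m}"
    and outside: "\<And>q. q < m \<Longrightarrow> q \<notin> P \<Longrightarrow> xs ! q = ys ! q"
    and image: "(\<lambda>p. xs ! p) ` P = (\<lambda>p. ys ! p) ` P"
  shows "list_sign xs * list_sign ys =
     (\<Prod>p\<in>index_pairs m \<inter> P \<times> P. pair_sign xs (fst p) (snd p) * pair_sign ys (fst p) (snd p))"
proof -
  define Q where "Q = {..<m} - P"
  let ?PP = "index_pairs m \<inter> P \<times> P" and ?QQ = "index_pairs m \<inter> Q \<times> Q"
    and ?MX = "index_pairs m - P \<times> P - Q \<times> Q"
  define S where "S zs T = (\<Prod>p\<in>T. pair_sign zs (fst p) (snd p))" for zs T
  have split: "S zs (index_pairs m) = S zs ?PP * S zs ?QQ * S zs ?MX" for zs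
  proof -
    have "index_pairs m = ?PP \<union> ?QQ \<union> ?MX" by auto
    moreover have "S zs (?PP \<union> ?QQ \<union> ?MX) = S zs (?PP \<union> ?QQ) * S zs ?MX"
      unfolding S_def by (rule prod.union_disjoint) auto
    moreover have "S zs (?PP \<union> ?QQ) = S zs ?PP * S zs ?QQ"
      unfolding S_def by (rule prod.union_disjoint) (auto simp: Q_def)
    ultimately show ?thesis by metis
  qed
  have QQ: "S xs ?QQ = S ys ?QQ"
    unfolding S_def pair_sign_def by (rule prod.cong) (auto simp: Q_def index_pairs_def outside)
  have same_rank: "(\<Prod>p\<in>P. order_sign (xs ! p) v) = (\<Prod>p\<in>P. order_sign (ys ! p) v)" for v
  proof -
    have "inj_on (\<lambda>p. xs ! p) P" "inj_on (\<lambda>p. ys ! p) P"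
      using dist P len by (auto intro!: inj_on_nth)
    then show ?thesis
      using prod.reindex[of "\<lambda>p. xs ! p" P "\<lambda>u. order_sign u v"]
        prod.reindex[of "\<lambda>p. ys ! p" P "\<lambda>u. order_sign u v"] image by simp
  qed
  have mixed: "S zs ?MX = (\<Prod>q\<in>Q. (\<Prod>p\<in>P. order_sign p q) * (\<Prod>p\<in>P. order_sign (zs ! p) (zs ! q)))"
    if "zs \<in> {xs, ys}" for zs
    using prod_pair_sign_mixed[of zs m P] that dist len P by (auto simp: S_def Q_def prod.distrib)
  have MX: "S xs ?MX = S ys ?MX"
    unfolding mixed[of xs, simplified] mixed[of ys, simplified]
    by (rule prod.cong[OF refl]) (auto simp: same_rank Q_def outside)
  have "list_sign xs * list_sign ys = S xs (index_pairs m) * S ys (index_pairs m)"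
    by (simp add: list_sign_eq_prod_pair_sign S_def len)
  also have "\<dots> = (S xs ?PP * S ys ?PP) * (S ys ?QQ * S ys ?QQ) * (S ys ?MX * S ys ?MX)"
    by (simp add: split QQ MX mult_ac)
  also have "\<dots> = S xs ?PP * S ys ?PP"
    by (simp add: S_def prod_pair_sign_sq)
  finally show ?thesis
    by (simp add: S_def prod.distrib)
qed

lemma set_eq_image_nth: "set xs = (\<lambda>p. xs ! p) ` {..<length xs}"
  by (simp add: nth_image lessThan_atLeast0)

section \<open>Pluecker relations at points supported on a chain\<close>

definition pos_choices :: "nat \<Rightarrow> nat \<Rightarrow> nat list set" where
  "pos_choices k d = {rs. sorted_wrt (<) rs \<and> length rs = k \<and> set rs \<subseteq> {..<d}}"

lemma pos_choices_facts:
  assumes "rs \<in> pos_choices k d"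
  shows "distinct rs" "length rs = k" "\<And>t. t < k \<Longrightarrow> rs ! t < d"
    "\<And>s t. s < t \<Longrightarrow> t < k \<Longrightarrow> rs ! s < rs ! t"
    "set rs = (\<lambda>t. rs ! t) ` {..<k}"
proof -
  show "distinct rs" "length rs = k" "\<And>t. t < k \<Longrightarrow> rs ! t < d"
    "\<And>s t. s < t \<Longrightarrow> t < k \<Longrightarrow> rs ! s < rs ! t"
    using assms unfolding pos_choices_def
    by (auto simp: strict_sorted_iff sorted_wrt_nth_less dest!: nth_mem)
  then show "set rs = (\<lambda>t. rs ! t) ` {..<k}"
    using set_eq_image_nth[of rs] by simp
qed

lemma finite_pos_choices: "finite (pos_choices k d)"
proof (rule finite_subset)
  show "pos_choices k d \<subseteq> {xs. set xs \<subseteq> {..<d} \<and> length xs = k}"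
    by (auto simp: pos_choices_def)
qed (rule finite_lists_length_eq, simp)

lemma inj_on_chosen_entries:
  assumes "rs \<in> pos_choices k (length L)" "distinct L"
  shows "inj_on (\<lambda>t. L ! (rs ! t)) {..<k}"
  using pos_choices_facts[OF assms(1)] assms(2)
  by (auto simp: inj_on_def nth_eq_iff_index_eq)

lemma length_J_repl: "k \<le> length J \<Longrightarrow> length (J_repl k J L rs) = length J"
  by (simp add: J_repl_def)

lemma nth_J_repl_less: "t < k \<Longrightarrow> k \<le> length J \<Longrightarrow> J_repl k J L rs ! t = L ! (rs ! t)"
  by (simp add: J_repl_def nth_append)

lemma nth_J_repl_ge: "k \<le> t \<Longrightarrow> t < length J \<Longrightarrow> J_repl k J L rs ! t = J ! t"
  by (simp add: J_repl_def nth_append)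

lemma L_repl_props:
  assumes "distinct rs" "k \<le> length rs" "\<forall>t<length rs. rs ! t < length L"
  shows "length (L_repl k J L rs) = length L \<and>
    (\<forall>t<k. L_repl k J L rs ! (rs ! t) = J ! t) \<and>
    (\<forall>p. p \<notin> (\<lambda>t. rs ! t) ` {..<k} \<longrightarrow> L_repl k J L rs ! p = L ! p)"
  using assms(2)
proof (induction k)
  case 0 then show ?case by (simp add: L_repl_def)
next
  case (Suc k)
  then have IH: "length (L_repl k J L rs) = length L"
    "\<forall>t<k. L_repl k J L rs ! (rs ! t) = J ! t"
    "\<forall>p. p \<notin> (\<lambda>t. rs ! t) ` {..<k} \<longrightarrow> L_repl k J L rs ! p = L ! p" by auto
  have step: "L_repl (Suc k) J L rs = (L_repl k J L rs)[rs ! k := J ! k]"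
    by (simp add: L_repl_def)
  have kl: "k < length rs" using Suc.prems by simp
  have rsk: "rs ! k < length L" using assms(3) kl by simp
  have ne: "rs ! t \<noteq> rs ! k" if "t < k" for t
    using assms(1) kl that by (simp add: nth_eq_iff_index_eq)
  show ?case
  proof (intro conjI allI impI)
    show "length (L_repl (Suc k) J L rs) = length L" by (simp add: step IH)
  next
    fix t assume "t < Suc k"
    then show "L_repl (Suc k) J L rs ! (rs ! t) = J ! t"
    proof (cases "t = k")
      case True then show ?thesis using IH rsk by (simp add: step)
    next
      case False
      then have "t < k" using \<open>t < Suc k\<close> by simp
      then show ?thesis using IH ne[of t] by (simp add: step nth_list_update)
    qed
  next
    fix p assume "p \<notin> (\<lambda>t. rs ! t) ` {..<Suc k}"
    then have "p \<noteq> rs ! k" "p \<notin> (\<lambda>t. rs ! t) ` {..<k}" by auto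
    then show "L_repl (Suc k) J L rs ! p = L ! p"
      using IH by (simp add: step nth_list_update)
  qed
qed

lemma L_repl_facts:
  assumes "rs \<in> pos_choices k (length L)"
  shows "length (L_repl k J L rs) = length L"
    "\<And>t. t < k \<Longrightarrow> L_repl k J L rs ! (rs ! t) = J ! t"
    "\<And>p. p \<notin> set rs \<Longrightarrow> L_repl k J L rs ! p = L ! p"
  using L_repl_props[of rs k L J] pos_choices_facts[OF assms] by auto

text \<open>\<open>J_repl\<close> and \<open>L_repl\<close> exchange the first \<open>k\<close> entries of \<open>J\<close> with the entries of \<open>L\<close> at
  the positions \<open>rs\<close>; this merely rearranges both lists exactly when the two sets of
  exchanged entries coincide.\<close>

definition exchange_permutes :: "nat \<Rightarrow> nat list \<Rightarrow> nat list \<Rightarrow> nat list \<Rightarrow> bool" where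
  "exchange_permutes k J L rs \<longleftrightarrow> set (take k J) = (\<lambda>t. L ! (rs ! t)) ` {..<k}"

lemma set_take_eq_image_nth: "k \<le> length J \<Longrightarrow> set (take k J) = (\<lambda>t. J ! t) ` {..<k}"
  by (simp add: nth_image[symmetric] lessThan_atLeast0)

lemma J_repl_if_exchange_permutes:
  assumes "distinct J" "distinct L" "k \<le> length J" "rs \<in> pos_choices k (length L)"
    and "exchange_permutes k J L rs"
  shows "distinct (J_repl k J L rs)" "set (J_repl k J L rs) = set J"
proof -
  have J_repl: "J_repl k J L rs = map (\<lambda>t. L ! (rs ! t)) [0..<k] @ drop k J"
    by (simp add: J_repl_def)
  have "set (take k J) \<inter> set (drop k J) = {}"
    using assms(1) by (metis append_take_drop_id distinct_append)
  then show "distinct (J_repl k J L rs)"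
    using assms inj_on_chosen_entries[OF assms(4,2)]
    by (simp add: J_repl distinct_map lessThan_atLeast0 exchange_permutes_def)
  show "set (J_repl k J L rs) = set J"
    using assms(5) unfolding J_repl exchange_permutes_def
    by (simp add: lessThan_atLeast0) (metis append_take_drop_id set_append)
qed

lemma set_L_repl_if_exchange_permutes:
  assumes "k \<le> length J" "rs \<in> pos_choices k (length L)" "exchange_permutes k J L rs"
  shows "set (L_repl k J L rs) = set L"
proof -
  define L' where "L' = L_repl k J L rs"
  let ?rest = "{..<length L} - set rs"
  note R = pos_choices_facts[OF assms(2)]
  note LR = L_repl_facts[OF assms(2), where J=J, folded L'_def]
  have "(\<lambda>p. L' ! p) ` set rs = (\<lambda>t. J ! t) ` {..<k}"
    unfolding R(5) image_image using LR(2) by simp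
  also have "\<dots> = (\<lambda>p. L ! p) ` set rs"
    using assms(3) unfolding R(5) image_image exchange_permutes_def set_take_eq_image_nth[OF assms(1)] .
  finally have chosen: "(\<lambda>p. L' ! p) ` set rs = (\<lambda>p. L ! p) ` set rs" .
  have rest: "(\<lambda>p. L' ! p) ` ?rest = (\<lambda>p. L ! p) ` ?rest"
    using LR(3) by simp
  have "{..<length L} = set rs \<union> ?rest" using R(3,5) by auto
  then show "set L' = set L"
    using chosen rest by (metis LR(1) image_Un set_eq_image_nth)
qed

lemma distinct_L_repl_if_exchange_permutes:
  assumes "distinct L" "k \<le> length J" "rs \<in> pos_choices k (length L)" "exchange_permutes k J L rs"
  shows "distinct (L_repl k J L rs)"
  using set_L_repl_if_exchange_permutes[OF assms(2-4)] L_repl_facts(1)[OF assms(3)] assms(1)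
  by (metis card_distinct distinct_card)

lemma index_pairs_chosen:
  assumes "rs \<in> pos_choices k d"
  shows "index_pairs d \<inter> set rs \<times> set rs = (\<lambda>p. (rs ! fst p, rs ! snd p)) ` index_pairs k"
    (is "?L = ?R")
    and "inj_on (\<lambda>p. (rs ! fst p, rs ! snd p)) (index_pairs k)"
proof -
  note R = pos_choices_facts[OF assms]
  show "inj_on (\<lambda>p. (rs ! fst p, rs ! snd p)) (index_pairs k)"
    using R(1,2) by (auto simp: inj_on_def index_pairs_def nth_eq_iff_index_eq)
  show "?L = ?R"
  proof
    show "?R \<subseteq> ?L" using R(3,4) by (auto simp: index_pairs_def R(5))
    show "?L \<subseteq> ?R"
    proof
      fix p assume "p \<in> ?L"
      then obtain s t where st: "s < k" "t < k" "p = (rs ! s, rs ! t)" "rs ! s < rs ! t"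
        unfolding R(5) by (auto simp: index_pairs_def)
      then have "s < t" using R(4)[of t s] by (metis linorder_neqE_nat order_less_asym)
      then show "p \<in> ?R" using st by (force simp: index_pairs_def)
    qed
  qed
qed

lemma list_sign_mult_J_repl:
  assumes dJ: "distinct J" and dL: "distinct L" and k: "k \<le> length J"
    and rs: "rs \<in> pos_choices k (length L)" and ex: "exchange_permutes k J L rs"
  defines "J' \<equiv> J_repl k J L rs"
  shows "list_sign J * list_sign J' =
    (\<Prod>p\<in>index_pairs k. pair_sign J (fst p) (snd p) * pair_sign J' (fst p) (snd p))"
proof -
  have J': "distinct J'" "length J' = length J"
    using J_repl_if_exchange_permutes[OF dJ dL k rs ex] length_J_repl[OF k] by (simp_all add: J'_def)
  have "index_pairs (length J) \<inter> {..<k} \<times> {..<k} = index_pairs k"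
    using k by (auto simp: index_pairs_def)
  moreover have "(\<lambda>p. J ! p) ` {..<k} = (\<lambda>p. J' ! p) ` {..<k}"
    using ex k set_take_eq_image_nth[OF k] by (simp add: exchange_permutes_def J'_def nth_J_repl_less)
  ultimately show ?thesis
    using list_sign_mult_eq_prod_block[OF refl J'(2) dJ J'(1), of "{..<k}"] k
    by (simp add: J'_def nth_J_repl_ge)
qed

lemma list_sign_mult_L_repl:
  assumes dL: "distinct L" and k: "k \<le> length J"
    and rs: "rs \<in> pos_choices k (length L)" and ex: "exchange_permutes k J L rs"
  defines "L' \<equiv> L_repl k J L rs"
  shows "list_sign L * list_sign L' =
    (\<Prod>p\<in>index_pairs k. pair_sign L (rs ! fst p) (rs ! snd p) * pair_sign L' (rs ! fst p) (rs ! snd p))"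
proof -
  note R = pos_choices_facts[OF rs]
  note LR = L_repl_facts[OF rs, where J=J, folded L'_def]
  have L': "distinct L'" "length L' = length L"
    using distinct_L_repl_if_exchange_permutes[OF dL k rs ex] LR(1) by (simp_all add: L'_def)
  have "(\<lambda>p. L ! p) ` set rs = (\<lambda>p. L' ! p) ` set rs"
    using ex k unfolding R(5) image_image exchange_permutes_def set_take_eq_image_nth[OF k]
    by (simp add: LR(2))
  then have "list_sign L * list_sign L' = (\<Prod>p\<in>index_pairs (length L) \<inter> set rs \<times> set rs.
      pair_sign L (fst p) (snd p) * pair_sign L' (fst p) (snd p))"
    using list_sign_mult_eq_prod_block[OF refl L'(2) dL L'(1), of "set rs"] R(3,5) LR(3) by auto
  then show ?thesis
    by (simp add: index_pairs_chosen(1)[OF rs] prod.reindex[OF index_pairs_chosen(2)[OF rs]])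
qed

text \<open>Both exchanged lists carry the exchanged entries in the same relative order, so the signs
  of the two rearrangements agree.\<close>

lemma list_sign_exchange:
  assumes "distinct J" "distinct L" "k \<le> length J" "rs \<in> pos_choices k (length L)"
    and "exchange_permutes k J L rs"
  shows "list_sign (J_repl k J L rs) * list_sign (L_repl k J L rs) = list_sign J * list_sign L"
proof -
  let ?J' = "J_repl k J L rs" and ?L' = "L_repl k J L rs"
  have "list_sign J * list_sign ?J' = list_sign L * list_sign ?L'"
    unfolding list_sign_mult_J_repl[OF assms] list_sign_mult_L_repl[OF assms(2-5)]
    using assms(3) L_repl_facts(2)[OF assms(4)]
    by (intro prod.cong refl) (auto simp: index_pairs_def pair_sign_def nth_J_repl_less)
  then have "list_sign ?J' * list_sign ?L' * (list_sign L * list_sign L) =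
      list_sign J * list_sign L * (list_sign ?J' * list_sign ?J')"
    by (simp add: algebra_simps)
  then show ?thesis by (simp add: list_sign_sq)
qed

lemma set_L_repl_if_subset:
  assumes dL: "distinct L" and k: "k \<le> length J" and rs: "rs \<in> pos_choices k (length L)"
    and dL': "distinct (L_repl k J L rs)"
    and sub: "set (J_repl k J L rs) \<subseteq> set (L_repl k J L rs)"
  shows "set (L_repl k J L rs) = set L"
proof -
  define L' where "L' = L_repl k J L rs"
  note R = pos_choices_facts[OF rs]
  note LR = L_repl_facts[OF rs, where J=J, folded L'_def]
  have "set L \<subseteq> set L'"
  proof
    fix a assume "a \<in> set L"
    then obtain p where p: "p < length L" "a = L ! p" by (auto simp: set_conv_nth)
    show "a \<in> set L'"
    proof (cases "p \<in> set rs")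
      case True
      then obtain t where t: "t < k" "p = rs ! t" using R(5) by auto
      then have "a = J_repl k J L rs ! t" "t < length (J_repl k J L rs)"
        using p k by (simp_all add: nth_J_repl_less length_J_repl)
      then show ?thesis using sub L'_def nth_mem by blast
    next
      case False
      then show ?thesis using LR(1,3) p by (metis nth_mem)
    qed
  qed
  then show ?thesis
    using dL dL' LR(1) L'_def by (metis card_subset_eq distinct_card finite_set)
qed

lemma exchange_permutes_if_subset:
  assumes dJ: "distinct J" and dL: "distinct L" and k: "k \<le> length J"
    and rs: "rs \<in> pos_choices k (length L)"
    and dL': "distinct (L_repl k J L rs)"
    and sub: "set (J_repl k J L rs) \<subseteq> set (L_repl k J L rs)"
  shows "exchange_permutes k J L rs"
proof -
  define L' where "L' = L_repl k J L rs"
  define B where "B = (\<lambda>t. L ! (rs ! t)) ` {..<k}"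
  note R = pos_choices_facts[OF rs]
  note LR = L_repl_facts[OF rs, where J=J, folded L'_def]
  have same_set: "set L' = set L"
    unfolding L'_def by (rule set_L_repl_if_subset[OF dL k rs dL' sub])
  have "set (take k J) \<subseteq> B"
  proof
    fix a assume "a \<in> set (take k J)"
    then obtain t where t: "t < k" "a = J ! t" using set_take_eq_image_nth[OF k] by auto
    then have a: "a = L' ! (rs ! t)" using LR(2) by simp
    then have "a \<in> set L" using same_set LR(1) R(3) t by (metis nth_mem)
    then obtain p where p: "p < length L" "a = L ! p" by (auto simp: set_conv_nth)
    have "p \<in> set rs"
    proof (rule ccontr)
      assume "p \<notin> set rs"
      then have "L' ! p = L' ! (rs ! t)" "p \<noteq> rs ! t" using LR(3) p a R(5) t by auto
      then show False using dL' LR(1) p(1) R(3)[OF t(1)] by (simp add: L'_def nth_eq_iff_index_eq)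
    qed
    then show "a \<in> B" using p R(5) by (auto simp: B_def)
  qed
  moreover have "card (set (take k J)) = k" using dJ k by (simp add: distinct_card)
  moreover have "card B = k"
    unfolding B_def using card_image[OF inj_on_chosen_entries[OF rs dL]] by simp
  ultimately show ?thesis
    unfolding exchange_permutes_def B_def by (metis card_subset_eq finite_imageI finite_lessThan)
qed

definition chain_support :: "(pvar \<Rightarrow> complex) \<Rightarrow> bool" where
  "chain_support y \<longleftrightarrow> (\<forall>I I'. y I \<noteq> 0 \<longrightarrow> y I' \<noteq> 0 \<longrightarrow> card I \<le> card I' \<longrightarrow> I \<subseteq> I')"

definition eval_seq :: "(pvar \<Rightarrow> complex) \<Rightarrow> nat list \<Rightarrow> complex" where
  "eval_seq y J = (if distinct J then list_sign J * y (set J) else 0)"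

lemma peval_pseq: "peval y (pseq J) = eval_seq y J"
  by (simp add: pseq_def eval_seq_def peval_mult peval_power peval_uminus peval_PVar list_sign_def)

lemma subset_if_chain_support:
  assumes "chain_support y" "eval_seq y J \<noteq> 0" "eval_seq y L \<noteq> 0" "length J \<le> length L"
  shows "set J \<subseteq> set L"
  using assms by (auto simp: chain_support_def eval_seq_def distinct_card split: if_splits)

lemma pluecker_term_exchange:
  assumes "distinct J" "distinct L" "k \<le> length J" "rs \<in> pos_choices k (length L)"
    and "exchange_permutes k J L rs"
  shows "eval_seq y (J_repl k J L rs) * eval_seq y (L_repl k J L rs) = eval_seq y J * eval_seq y L"
  using assms J_repl_if_exchange_permutes[OF assms] set_L_repl_if_exchange_permutes[OF assms(3-5)]
    distinct_L_repl_if_exchange_permutes[OF assms(2-5)] list_sign_exchange[OF assms]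
  by (simp add: eval_seq_def mult_ac)

lemma exchange_permutes_if_term_nonzero:
  assumes "chain_support y" "distinct J" "distinct L" "k \<le> length J" "length J \<le> length L"
    and rs: "rs \<in> pos_choices k (length L)"
    and "eval_seq y (J_repl k J L rs) * eval_seq y (L_repl k J L rs) \<noteq> 0"
  shows "exchange_permutes k J L rs"
proof (rule exchange_permutes_if_subset[OF assms(2-4) rs])
  have nonzero: "eval_seq y (J_repl k J L rs) \<noteq> 0" "eval_seq y (L_repl k J L rs) \<noteq> 0"
    using assms(7) by auto
  then show "distinct (L_repl k J L rs)" by (simp add: eval_seq_def split: if_splits)
  show "set (J_repl k J L rs) \<subseteq> set (L_repl k J L rs)"
    using nonzero by (rule subset_if_chain_support[OF assms(1)])
      (simp add: length_J_repl[OF assms(4)] L_repl_facts(1)[OF rs] assms(5))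
qed

lemma exchange_permutes_unique:
  assumes "distinct L" "k \<le> length J"
    and "rs \<in> pos_choices k (length L)" "exchange_permutes k J L rs"
  shows "rs = sorted_list_of_set {p. p < length L \<and> L ! p \<in> set (take k J)}"
proof -
  note R = pos_choices_facts[OF assms(3)]
  have "set rs = {p. p < length L \<and> L ! p \<in> set (take k J)}"
  proof
    show "set rs \<subseteq> {p. p < length L \<and> L ! p \<in> set (take k J)}"
      using assms(4) R(3,5) by (auto simp: exchange_permutes_def)
    show "{p. p < length L \<and> L ! p \<in> set (take k J)} \<subseteq> set rs"
    proof safe
      fix p assume p: "p < length L" "L ! p \<in> set (take k J)"
      then obtain t where "t < k" "L ! p = L ! (rs ! t)"
        using assms(4) by (auto simp: exchange_permutes_def)
      then have "p = rs ! t" using assms(1) p(1) R(3) by (simp add: nth_eq_iff_index_eq)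
      then show "p \<in> set rs" using \<open>t < k\<close> R(5) by simp
    qed
  qed
  then show ?thesis
    using assms(3) by (intro strict_sorted_equal[symmetric]) (auto simp: pos_choices_def strict_sorted_iff)
qed

lemma exists_exchange_permutes:
  assumes "distinct J" "distinct L" "k \<le> length J" "set J \<subseteq> set L"
  shows "\<exists>rs\<in>pos_choices k (length L). exchange_permutes k J L rs"
proof
  let ?P = "{p. p < length L \<and> L ! p \<in> set (take k J)}"
  define rs where "rs = sorted_list_of_set ?P"
  have sub: "set (take k J) \<subseteq> set L" using assms(4) by (meson set_take_subset subset_trans)
  have image: "(\<lambda>p. L ! p) ` ?P = set (take k J)"
  proof
    show "set (take k J) \<subseteq> (\<lambda>p. L ! p) ` ?P"
    proof
      fix a assume a: "a \<in> set (take k J)"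
      then obtain p where "p < length L" "a = L ! p" using sub by (metis in_set_conv_nth subsetD)
      with a show "a \<in> (\<lambda>p. L ! p) ` ?P" by blast
    qed
  qed auto
  moreover have "inj_on (\<lambda>p. L ! p) ?P" using assms(2) by (auto intro: inj_on_nth)
  ultimately have "length rs = k"
    using card_image distinct_card[OF assms(1)] assms(1,3) by (fastforce simp: rs_def distinct_card)
  then show rs: "rs \<in> pos_choices k (length L)"
    by (auto simp: pos_choices_def rs_def)
  show "exchange_permutes k J L rs"
    unfolding exchange_permutes_def using image pos_choices_facts(5)[OF rs]
    by (simp add: rs_def image_image[symmetric])
qed

lemma peval_pluecker_rel_chain:
  assumes "chain_support y" and dJ: "distinct J" and dL: "distinct L"
    and k: "k \<le> length J" and JL: "length J \<le> length L"
  shows "peval y (pluecker_rel k J L) = 0"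
proof -
  let ?RS = "pos_choices k (length L)" and ?v = "eval_seq y J * eval_seq y L"
  define tm where "tm rs = eval_seq y (J_repl k J L rs) * eval_seq y (L_repl k J L rs)" for rs
  define E where "E = {rs \<in> ?RS. exchange_permutes k J L rs}"
  have "peval y (pluecker_rel k J L) = ?v - (\<Sum>rs\<in>?RS. tm rs)"
    unfolding pluecker_rel_def pos_choices_def[symmetric] tm_def
    by (simp add: peval_diff peval_sum peval_mult peval_pseq)
  also have "(\<Sum>rs\<in>?RS. tm rs) = (\<Sum>rs\<in>E. tm rs)"
    using exchange_permutes_if_term_nonzero[OF assms(1) dJ dL k JL] finite_pos_choices
    by (intro sum.mono_neutral_right) (auto simp: E_def tm_def)
  also have "\<dots> = of_nat (card E) * ?v"
    using pluecker_term_exchange[OF dJ dL k] by (simp add: E_def tm_def)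
  also have "of_nat (card E) * ?v = ?v"
  proof (cases "?v = 0")
    case False
    then have "set J \<subseteq> set L" using subset_if_chain_support[OF assms(1) _ _ JL] by auto
    then obtain rs where "rs \<in> E"
      using exists_exchange_permutes[OF dJ dL k] by (auto simp: E_def)
    moreover have "E \<subseteq> {rs}"
      using exchange_permutes_unique[OF dL k] \<open>rs \<in> E\<close> by (auto simp: E_def)
    ultimately have "E = {rs}" by blast
    then show ?thesis by simp
  qed simp
  finally show ?thesis by simp
qed

section \<open>Torus degeneration\<close>

text \<open>For a coordinate flag \<open>F\<close> this point moves along a one-parameter torus orbit as \<open>t\<close>
  varies, so an ideal vanishing on the whole orbit has initial forms vanishing at \<open>t = 1\<close>.\<close>

definition weighted_point :: "nat \<Rightarrow> pvar set \<Rightarrow> complex \<Rightarrow> pvar \<Rightarrow> complex" where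
  "weighted_point n F t I = (if I \<in> F then t ^ wt_var n I else 0)"

lemma eval_mono_weighted_point:
  "eval_mono (weighted_point n F t) m =
     (if Poly_Mapping.keys m \<subseteq> F then t ^ wt_mono n m else 0)"
proof (cases "Poly_Mapping.keys m \<subseteq> F")
  case True
  have "eval_mono (weighted_point n F t) m =
      (\<Prod>I\<in>Poly_Mapping.keys m. t ^ (Poly_Mapping.lookup m I * wt_var n I))"
    unfolding eval_mono_def using True
    by (intro prod.cong refl) (auto simp: weighted_point_def power_mult mult.commute)
  also have "\<dots> = t ^ wt_mono n m" by (simp add: wt_mono_def power_sum)
  finally show ?thesis using True by simp
next
  case False
  then obtain I where "I \<in> Poly_Mapping.keys m" "I \<notin> F" by blast
  then have "eval_mono (weighted_point n F t) m = 0"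
    unfolding eval_mono_def by (intro prod_zero) (auto simp: weighted_point_def in_keys_iff)
  then show ?thesis using False by simp
qed

lemma peval_in_w_weighted_point:
  assumes vanish: "\<And>t g. g \<in> G \<Longrightarrow> peval (weighted_point n F t) g = 0"
    and f: "f \<in> ideal_gen n G"
  shows "peval (weighted_point n F 1) (in_w n f) = 0"
proof -
  define K where "K = {m \<in> Poly_Mapping.keys f. Poly_Mapping.keys m \<subseteq> F}"
  define p where "p = (\<Sum>m\<in>K. monom (Poly_Mapping.lookup f m) (wt_mono n m))"
  have "poly p t = peval (weighted_point n F t) f" for t
  proof -
    have "poly p t = (\<Sum>m\<in>K. Poly_Mapping.lookup f m * t ^ wt_mono n m)"
      by (simp add: p_def poly_sum poly_monom)
    also have "\<dots> = peval (weighted_point n F t) f"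
      unfolding K_def peval_eq_sum_eval_mono eval_mono_weighted_point
      by (simp add: sum.inter_filter if_distrib cong: if_cong)
    finally show ?thesis .
  qed
  then have "p = 0"
    using peval_ideal_gen[OF f vanish] poly_all_0_iff_0 by metis
  define mw where "mw = Min (wt_mono n ` Poly_Mapping.keys f)"
  have "peval (weighted_point n F 1) (in_w n f) =
      (\<Sum>m\<in>{m\<in>Poly_Mapping.keys f. wt_mono n m = mw}.
        if Poly_Mapping.keys m \<subseteq> F then Poly_Mapping.lookup f m else 0)"
    unfolding in_w_eq_filter_monos mw_def[symmetric] peval_eq_sum_eval_mono keys_filter_monos
    by (intro sum.cong refl) (simp add: lookup_filter_monos eval_mono_weighted_point)
  also have "\<dots> = (\<Sum>m\<in>K. if wt_mono n m = mw then Poly_Mapping.lookup f m else 0)"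
    unfolding K_def by (simp add: sum.inter_filter) (intro sum.cong; auto)
  also have "\<dots> = coeff p mw"
    by (simp add: p_def coeff_sum eq_commute)
  finally show ?thesis by (simp add: \<open>p = 0\<close>)
qed

section \<open>The Schubert conditions of \<open>w = w0 s_i\<close>\<close>

lemma w_eq_w0_comp_simple_refl:
  assumes "w \<circ> simple_refl i = w0 n"
  shows "w x = w0 n (simple_refl i x)"
  using assms by (metis comp_apply simple_refl_def transpose_involutory)

lemma w_image_eq:
  assumes "w \<circ> simple_refl i = w0 n"
  shows "w ` A = w0 n ` simple_refl i ` A"
  using w_eq_w0_comp_simple_refl[OF assms] by (auto simp: image_iff)

lemma simple_refl_image_interval: "1 \<le> i \<Longrightarrow> k \<noteq> i \<Longrightarrow> simple_refl i ` {1..k} = {1..k}"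
  unfolding simple_refl_def by (rule transpose_image_eq) auto

lemma simple_refl_image_interval_eq: "1 \<le> i \<Longrightarrow> simple_refl i ` {1..i} = {1..i-1} \<union> {i+1}"
  unfolding simple_refl_def by (auto simp: in_transpose_image_iff transpose_def)

lemma w0_image: "A \<subseteq> {1..n} \<Longrightarrow> w0 n ` A = (\<lambda>j. n + 1 - j) ` A"
  by (auto simp: w0_def)

lemma image_reflect_interval: "(b::nat) \<le> n \<Longrightarrow> (\<lambda>j. n + 1 - j) ` {1..b} = {n+1-b..n}"
proof
  show "{n+1-b..n} \<subseteq> (\<lambda>j. n + 1 - j) ` {1..b}" if "b \<le> n"
  proof
    fix x assume "x \<in> {n+1-b..n}"
    then have "n + 1 - x \<in> {1..b}" "x = n + 1 - (n + 1 - x)" using that by auto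
    then show "x \<in> (\<lambda>j. n + 1 - j) ` {1..b}" by blast
  qed
qed auto

lemma w_image_interval:
  assumes "w \<circ> simple_refl i = w0 n" "1 \<le> i" "i < n" "k \<le> n" "k \<noteq> i"
  shows "w ` {1..k} = {n+1-k..n}"
proof -
  have "w ` {1..k} = w0 n ` {1..k}"
    unfolding w_image_eq[OF assms(1)] simple_refl_image_interval[OF assms(2,5)] ..
  also have "\<dots> = {n+1-k..n}"
    using assms(4) image_reflect_interval[of k n] w0_image[of "{1..k}" n] by simp
  finally show ?thesis .
qed

lemma w_image_interval_eq:
  assumes "w \<circ> simple_refl i = w0 n" "1 \<le> i" "i < n"
  shows "w ` {1..i} = insert (n - i) {n-i+2..n}"
proof -
  have "w ` {1..i} = w0 n ` ({1..i-1} \<union> {i+1})"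
    unfolding w_image_eq[OF assms(1)] simple_refl_image_interval_eq[OF assms(2)] ..
  also have "\<dots> = (\<lambda>j. n + 1 - j) ` {1..i-1} \<union> {n - i}"
    using assms(2,3) by (subst w0_image) auto
  also have "\<dots> = insert (n - i) {n-i+2..n}"
    using assms(2,3) image_reflect_interval[of "i - 1" n] by auto
  finally show ?thesis .
qed

lemma strict_sorted_nth_add_le:
  assumes "sorted_wrt (<) (s::nat list)" "r \<le> j" "j < length s"
  shows "s ! r + (j - r) \<le> s ! j"
  using assms(2,3)
proof (induction j)
  case (Suc j)
  show ?case
  proof (cases "r = Suc j")
    case False
    then have "s ! r + (j - r) \<le> s ! j" using Suc by simp
    moreover have "s ! j < s ! Suc j" using assms(1) Suc.prems by (simp add: sorted_wrt_nth_less)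
    ultimately show ?thesis using False Suc.prems by simp
  qed simp
qed simp

lemma sorted_list_of_set_nth_bound:
  assumes "I \<subseteq> {1..n}" "r < card I"
  shows "sorted_list_of_set I ! r + card I \<le> n + 1 + r"
proof -
  define s where "s = sorted_list_of_set I"
  have fin: "finite I" using assms(1) finite_subset by blast
  have len: "length s = card I" and sorted: "sorted_wrt (<) s"
    by (simp_all add: s_def strict_sorted_iff)
  have "s ! r + (card I - 1 - r) \<le> s ! (card I - 1)"
    using strict_sorted_nth_add_le[OF sorted, of r "card I - 1"] assms(2) len by simp
  moreover have "s ! (card I - 1) \<in> I"
    using len assms(2) fin by (metis s_def diff_less nth_mem set_sorted_list_of_set gr_zeroI
      less_nat_zero_code zero_less_one)
  then have "s ! (card I - 1) \<le> n" using assms(1) by auto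
  ultimately show ?thesis using assms(2) unfolding s_def by simp
qed

lemma sorted_list_of_set_interval_nth: "a + r \<le> b \<Longrightarrow> sorted_list_of_set {a..b} ! r = a + r"
  by (metis atLeastLessThanSuc_atLeastAtMost sorted_list_of_set_range nth_upt le_imp_less_Suc)

lemma gale_le_top_interval:
  assumes "I \<subseteq> {1..n}" "card I = k" "k \<le> n"
  shows "gale_le I {n+1-k..n}"
  unfolding gale_le_def
proof (intro conjI allI impI)
  show "card I = card {n+1-k..n}" using assms by simp
next
  fix r assume r: "r < card I"
  then have "sorted_list_of_set {n+1-k..n} ! r = n + 1 - k + r"
    using assms by (intro sorted_list_of_set_interval_nth) simp
  then show "sorted_list_of_set I ! r \<le> sorted_list_of_set {n+1-k..n} ! r"
    using sorted_list_of_set_nth_bound[OF assms(1) r] assms by simp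
qed

lemma sorted_list_of_set_w_image:
  assumes "1 \<le> i" "i < (n::nat)"
  shows "sorted_list_of_set (insert (n - i) {n-i+2..n}) = (n - i) # [n-i+2..<Suc n]"
proof -
  let ?W = "insert (n - i) {n-i+2..n}"
  have "Min ?W = n - i" by (rule Min_eqI) auto
  moreover have "?W - {n - i} = {n-i+2..n}" by auto
  ultimately show ?thesis
    using sorted_list_of_set_nonempty[of ?W]
    by (simp add: atLeastLessThanSuc_atLeastAtMost[symmetric] sorted_list_of_set_range)
qed

lemma sorted_list_of_set_w_image_nth:
  assumes "1 \<le> i" "i < (n::nat)" "r < i"
  shows "sorted_list_of_set (insert (n - i) {n-i+2..n}) ! r = (if r = 0 then n - i else n - i + 1 + r)"
  unfolding sorted_list_of_set_w_image[OF assms(1,2)] using assms by (cases r) (simp_all del: upt_Suc)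

text \<open>For \<open>|I| = i\<close> the only \<open>i\<close>-subset not Gale-below \<open>w([i])\<close> is \<open>{n-i+1..n}\<close>: every other
  \<open>I\<close> has its least element at most \<open>n - i\<close>.\<close>

lemma gale_le_w_image_eq:
  assumes I: "I \<subseteq> {1..n}" "card I = i" and i: "1 \<le> i" "i < n" and ne: "I \<noteq> {n-i+1..n}"
  shows "gale_le I (insert (n - i) {n-i+2..n})"
  unfolding gale_le_def
proof (intro conjI allI impI)
  have fin: "finite I" using I(1) finite_subset by blast
  show "card I = card (insert (n - i) {n-i+2..n})" using I i by simp
  fix r assume r: "r < card I"
  show "sorted_list_of_set I ! r \<le> sorted_list_of_set (insert (n - i) {n-i+2..n}) ! r"
  proof (cases r)
    case 0
    have "I \<noteq> {}" using I i by auto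
    then have "sorted_list_of_set I ! 0 = Min I"
      using sorted_list_of_set_nonempty[OF fin] by simp
    moreover have "Min I \<le> n - i"
    proof (rule ccontr)
      assume "\<not> Min I \<le> n - i"
      have "I \<subseteq> {n-i+1..n}"
      proof
        fix x assume "x \<in> I"
        then have "Min I \<le> x" "x \<le> n" using fin I(1) by auto
        then show "x \<in> {n-i+1..n}" using \<open>\<not> Min I \<le> n - i\<close> by simp
      qed
      then have "I = {n-i+1..n}" using I i by (intro card_subset_eq) auto
      then show False using ne by simp
    qed
    ultimately show ?thesis using 0 sorted_list_of_set_w_image_nth[OF i] r I by simp
  next
    case (Suc r')
    then show ?thesis
      using sorted_list_of_set_w_image_nth[OF i, of r] sorted_list_of_set_nth_bound[OF I(1) r] r I
      by simp
  qed
qed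

lemma gale_le_w_image:
  assumes w: "w \<circ> simple_refl i = w0 n" and i: "1 \<le> i" "i < n"
    and I: "valid_var n I" and ne: "card I = i \<Longrightarrow> I \<noteq> {n-i+1..n}"
  shows "gale_le I (w ` {1..card I})"
proof -
  have Is: "I \<subseteq> {1..n}" "card I \<le> n" using I by (auto simp: valid_var_def)
  show ?thesis
  proof (cases "card I = i")
    case True
    then show ?thesis
      using gale_le_w_image_eq[OF Is(1) True i ne[OF True]] w_image_interval_eq[OF w i] by simp
  next
    case False
    then show ?thesis
      using gale_le_top_interval[OF Is(1) refl Is(2)] w_image_interval[OF w i Is(2) False] by simp
  qed
qed

lemma not_gale_le_w_image:
  assumes w: "w \<circ> simple_refl i = w0 n" and i: "1 \<le> i" "i < n"
  shows "\<not> gale_le {n-i+1..n} (w ` {1..card {n-i+1..n}})"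
proof
  let ?M = "{n-i+1..n}"
  assume gale: "gale_le ?M (w ` {1..card ?M})"
  have "card ?M = i" using i by simp
  then have "w ` {1..card ?M} = insert (n - i) {n-i+2..n}"
    using w_image_interval_eq[OF w i] by simp
  then have "sorted_list_of_set ?M ! 0 \<le> sorted_list_of_set (insert (n - i) {n-i+2..n}) ! 0"
    using gale i \<open>card ?M = i\<close> unfolding gale_le_def by simp
  then have "sorted_list_of_set ?M ! 0 \<le> n - i"
    using sorted_list_of_set_w_image_nth[OF i, of 0] i by simp
  moreover have "sorted_list_of_set ?M ! 0 = n - i + 1"
    using i by (subst sorted_list_of_set_interval_nth) auto
  ultimately show False by simp
qed

section \<open>Coordinate flags in the degenerate Schubert variety\<close>

definition prefix_sets :: "nat list \<Rightarrow> nat \<Rightarrow> pvar set" where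
  "prefix_sets \<sigma> n = {set (take k \<sigma>) | k. 1 \<le> k \<and> k \<le> n - 1}"

lemma
  assumes "distinct \<sigma>" "set \<sigma> = {1..n}"
  shows length_perm_list: "length \<sigma> = n"
    and card_set_take_perm_list: "k \<le> n \<Longrightarrow> card (set (take k \<sigma>)) = k"
proof -
  show "length \<sigma> = n" using assms by (metis card_atLeastAtMost diff_Suc_1 distinct_card)
  then show "k \<le> n \<Longrightarrow> card (set (take k \<sigma>)) = k"
    using assms(1) by (simp add: distinct_card)
qed

lemma valid_var_prefix_sets:
  assumes "distinct \<sigma>" "set \<sigma> = {1..n}" "I \<in> prefix_sets \<sigma> n"
  shows "valid_var n I"
  using assms card_set_take_perm_list[OF assms(1,2)] set_take_subset[of _ \<sigma>]
  by (force simp: prefix_sets_def valid_var_def)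

lemma chain_support_weighted_point_prefix_sets:
  assumes "distinct \<sigma>" "set \<sigma> = {1..n}"
  shows "chain_support (weighted_point n (prefix_sets \<sigma> n) t)"
  unfolding chain_support_def
proof (intro allI impI)
  fix I I' assume "weighted_point n (prefix_sets \<sigma> n) t I \<noteq> 0"
    "weighted_point n (prefix_sets \<sigma> n) t I' \<noteq> 0" "card I \<le> card I'"
  then obtain k k' where "I = set (take k \<sigma>)" "I' = set (take k' \<sigma>)" "k \<le> k'"
    using card_set_take_perm_list[OF assms]
    by (auto simp: weighted_point_def prefix_sets_def split: if_splits)
  then show "I \<subseteq> I'" by (simp add: set_take_subset_set_take)
qed

lemma weighted_point_prefix_sets_in_cone:
  assumes "distinct \<sigma>" "set \<sigma> = {1..n}"
  shows "weighted_point n (prefix_sets \<sigma> n) 1 \<in> cone n"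
  unfolding cone_def
proof (intro CollectI conjI allI impI ballI)
  fix I assume "\<not> valid_var n I"
  then show "weighted_point n (prefix_sets \<sigma> n) 1 I = 0"
    using valid_var_prefix_sets[OF assms] by (auto simp: weighted_point_def)
next
  fix k assume k: "k \<in> {1..n-1}"
  then have "set (take k \<sigma>) \<in> prefix_sets \<sigma> n" "card (set (take k \<sigma>)) = k"
    using card_set_take_perm_list[OF assms] by (auto simp: prefix_sets_def)
  then show "\<exists>I. valid_var n I \<and> card I = k \<and> weighted_point n (prefix_sets \<sigma> n) 1 I \<noteq> 0"
    using valid_var_prefix_sets[OF assms] by (auto simp: weighted_point_def)
qed

text \<open>A coordinate flag whose \<open>i\<close>-th space is not spanned by the last \<open>i\<close> basis vectors satisfies
  all Schubert conditions of \<open>w\<close>, and so does its whole torus orbit.\<close>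

lemma weighted_point_prefix_sets_in_degenerate_schubert:
  assumes w: "w \<circ> simple_refl i = w0 n" and i: "1 \<le> i" "i < n"
    and \<sigma>: "distinct \<sigma>" "set \<sigma> = {1..n}" and not_top: "set (take i \<sigma>) \<noteq> {n-i+1..n}"
  shows "weighted_point n (prefix_sets \<sigma> n) 1 \<in> degenerate_schubert n w"
  unfolding degenerate_schubert_def zero_set_def
proof (intro CollectI conjI ballI weighted_point_prefix_sets_in_cone[OF \<sigma>])
  let ?F = "prefix_sets \<sigma> n"
  let ?G = "pluecker_rels n \<union> {PVar I | I. valid_var n I \<and> \<not> gale_le I (w ` {1..card I})}"
  have vanish: "peval (weighted_point n ?F t) g = 0" if g: "g \<in> ?G" for t g
  proof (cases "g \<in> pluecker_rels n")
    case True
    then show ?thesis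
      by (auto simp: pluecker_rels_def intro!: peval_pluecker_rel_chain
        chain_support_weighted_point_prefix_sets[OF \<sigma>])
  next
    case False
    then obtain I where I: "g = PVar I" "valid_var n I" "\<not> gale_le I (w ` {1..card I})"
      using g by blast
    have "I \<notin> ?F"
    proof
      assume "I \<in> ?F"
      then have "card I = i \<Longrightarrow> I \<noteq> {n-i+1..n}"
        using not_top card_set_take_perm_list[OF \<sigma>] by (force simp: prefix_sets_def)
      then show False using gale_le_w_image[OF w i I(2)] I(3) by blast
    qed
    then show ?thesis by (simp add: I(1) peval_PVar weighted_point_def)
  qed
  fix h assume "h \<in> in_ideal n (I_schubert n w)"
  then show "peval (weighted_point n ?F 1) h = 0"
    unfolding in_ideal_def
  proof (rule peval_ideal_gen)
    fix g assume "g \<in> in_w n ` I_schubert n w"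
    then obtain f where "f \<in> ideal_gen n ?G" "g = in_w n f" by (auto simp: I_schubert_def)
    then show "peval (weighted_point n ?F 1) g = 0"
      using peval_in_w_weighted_point[OF vanish] by blast
  qed
qed

lemma exists_perm_list_extending:
  assumes "distinct xs" "set xs \<subseteq> {1..n::nat}"
  obtains \<sigma> where "distinct \<sigma>" "set \<sigma> = {1..n}" "take (length xs) \<sigma> = xs"
proof
  let ?\<sigma> = "xs @ sorted_list_of_set ({1..n} - set xs)"
  show "distinct ?\<sigma>" "set ?\<sigma> = {1..n}" "take (length xs) ?\<sigma> = xs"
    using assms by auto
qed

lemma exists_degenerate_schubert_point_nonzero:
  assumes w: "w \<circ> simple_refl i = w0 n" and i: "1 \<le> i" "i < n"
    and xs: "distinct xs" "set xs \<subseteq> {1..n}" and not_top: "\<not> set (take i xs) \<subseteq> {n-i+1..n}"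
    and k: "1 \<le> k" "k \<le> length xs" "k < n"
  shows "\<exists>x\<in>degenerate_schubert n w. x (set (take k xs)) \<noteq> 0"
proof -
  obtain \<sigma> where \<sigma>: "distinct \<sigma>" "set \<sigma> = {1..n}" and prefix: "take (length xs) \<sigma> = xs"
    using exists_perm_list_extending[OF xs] .
  have prefix_take: "take j xs = take j \<sigma>" if "j \<le> length xs" for j
    using that prefix by (metis min.absorb1 take_take)
  then have "set (take i xs) \<subseteq> set (take i \<sigma>)"
    by (metis nle_le set_take_subset_set_take take_all)
  then have "set (take i \<sigma>) \<noteq> {n-i+1..n}" using not_top by blast
  moreover have "set (take k xs) \<in> prefix_sets \<sigma> n"
    using k prefix_take[of k] by (auto simp: prefix_sets_def)
  ultimately show ?thesis
    using weighted_point_prefix_sets_in_degenerate_schubert[OF w i \<sigma>]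
    by (force simp: weighted_point_def)
qed

section \<open>Reducibility from a vanishing product\<close>

definition mono_pair :: "pvar \<Rightarrow> pvar \<Rightarrow> pmono" where
  "mono_pair A B = Poly_Mapping.single A 1 + Poly_Mapping.single B 1"

lemma mono_pair_comm: "mono_pair A B = mono_pair B A"
  by (simp add: mono_pair_def add.commute)

lemma keys_mono_pair: "Poly_Mapping.keys (mono_pair A B) = {A, B}"
  by (auto simp: mono_pair_def keys_add_pmono)

lemma mono_pair_neq: "A \<noteq> C \<Longrightarrow> A \<noteq> D \<Longrightarrow> mono_pair A B \<noteq> mono_pair C D"
  by (metis insert_iff keys_mono_pair singletonD)

lemma eval_mono_pair: "A \<noteq> B \<Longrightarrow> eval_mono x (mono_pair A B) = x A * x B"
  unfolding eval_mono_def keys_mono_pair by (simp add: mono_pair_def lookup_add lookup_single)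

lemma wt_mono_pair: "A \<noteq> B \<Longrightarrow> wt_mono n (mono_pair A B) = wt_var n A + wt_var n B"
  unfolding wt_mono_def keys_mono_pair by (simp add: mono_pair_def lookup_add lookup_single)

lemma block_deg_mono_pair:
  "block_deg k (mono_pair A B) = of_bool (card A = k) + of_bool (card B = k)"
proof -
  have "block_deg k (Poly_Mapping.single C 1) = of_bool (card C = k)" for C
  proof -
    have "{I \<in> Poly_Mapping.keys (Poly_Mapping.single C (1::nat)). card I = k} =
        (if card C = k then {C} else {})"
      by auto
    then show ?thesis unfolding block_deg_def by simp
  qed
  then show ?thesis by (simp add: mono_pair_def block_deg_add)
qed

lemma pseq_mult_pseq:
  "distinct X \<Longrightarrow> distinct Y \<Longrightarrow>
    pseq X * pseq Y = Poly_Mapping.single (mono_pair (set X) (set Y)) (list_sign X * list_sign Y)"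
proof -
  have "((-1)::ppoly) ^ k = Poly_Mapping.single 0 ((-1) ^ k)" for k
    by (induction k) (simp_all add: single_uminus mult_single)
  then show "distinct X \<Longrightarrow> distinct Y \<Longrightarrow> ?thesis"
    by (simp add: pseq_def PVar_def mult_single list_sign_def mono_pair_def)
qed

lemma keys_pseq_mult_pseq:
  "m \<in> Poly_Mapping.keys (pseq X * pseq Y) \<Longrightarrow>
    distinct X \<and> distinct Y \<and> m = mono_pair (set X) (set Y)"
proof (cases "distinct X \<and> distinct Y")
  case True
  then show "m \<in> Poly_Mapping.keys (pseq X * pseq Y) \<Longrightarrow> ?thesis"
    by (simp add: pseq_mult_pseq list_sign_nonzero)
next
  case False
  then show "m \<in> Poly_Mapping.keys (pseq X * pseq Y) \<Longrightarrow> ?thesis"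
    by (auto simp: pseq_def)
qed

lemma keys_pseq_mult_pseq_subset:
  assumes "m \<in> Poly_Mapping.keys (pseq X * pseq Y)" "set X \<subseteq> {1..n}" "set Y \<subseteq> {1..n}"
  shows "\<exists>A B. m = mono_pair A B \<and> A \<subseteq> {1..n} \<and> B \<subseteq> {1..n} \<and>
    card A = length X \<and> card B = length Y"
  using keys_pseq_mult_pseq[OF assms(1)] assms(2,3)
  by (intro exI[of _ "set X"] exI[of _ "set Y"]) (auto simp: distinct_card)

lemma multihom_if_keys_mono_pair:
  assumes "\<And>m. m \<in> Poly_Mapping.keys f \<Longrightarrow> \<exists>A B. m = mono_pair A B \<and>
      A \<subseteq> {1..n} \<and> B \<subseteq> {1..n} \<and> card A = e \<and> card B = d"
    and "1 \<le> e" "e \<le> n - 1" "1 \<le> d" "d \<le> n - 1"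
  shows "multihom n f"
  unfolding multihom_def A_ring_iff valid_mono_def
proof (intro conjI ballI allI)
  fix m I assume "m \<in> Poly_Mapping.keys f" "I \<in> Poly_Mapping.keys m"
  then show "valid_var n I"
    using assms by (force simp: keys_mono_pair valid_var_def)
next
  fix m1 m2 k assume "m1 \<in> Poly_Mapping.keys f" "m2 \<in> Poly_Mapping.keys f"
  then show "block_deg k m1 = block_deg k m2"
    using assms(1) by (metis block_deg_mono_pair)
qed

lemma set_J_repl_subset:
  "rs \<in> pos_choices k (length L) \<Longrightarrow> set (J_repl k J L rs) \<subseteq> set J \<union> set L"
  using pos_choices_facts(3) by (fastforce simp: J_repl_def dest: in_set_dropD)

lemma set_L_repl_subset:
  assumes "rs \<in> pos_choices k (length L)" "k \<le> length J"
  shows "set (L_repl k J L rs) \<subseteq> set J \<union> set L"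
proof
  note R = pos_choices_facts[OF assms(1)]
  note LR = L_repl_facts[OF assms(1), where J=J]
  fix a assume "a \<in> set (L_repl k J L rs)"
  then obtain p where p: "p < length L" "a = L_repl k J L rs ! p" using LR(1) by (auto simp: set_conv_nth)
  show "a \<in> set J \<union> set L"
  proof (cases "p \<in> set rs")
    case True
    then obtain t where "t < k" "p = rs ! t" using R(5) by auto
    then show ?thesis using LR(2) p assms(2) by simp
  next
    case False
    then show ?thesis using LR(3) p by simp
  qed
qed

lemma multihom_pluecker_rel:
  assumes "g \<in> pluecker_rels n"
  shows "multihom n g"
proof -
  obtain k J L where g: "g = pluecker_rel k J L" and c: "distinct J" "distinct L"
      "set J \<subseteq> {1..n}" "set L \<subseteq> {1..n}" "1 \<le> length J" "length J \<le> length L" "length L \<le> n - 1"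
      "k \<in> {1..length J}"
    using assms unfolding pluecker_rels_def by blast
  let ?RS = "pos_choices k (length L)"
  have keys_g: "Poly_Mapping.keys g \<subseteq> Poly_Mapping.keys (pseq J * pseq L) \<union>
      (\<Union>rs\<in>?RS. Poly_Mapping.keys (pseq (J_repl k J L rs) * pseq (L_repl k J L rs)))"
    unfolding g pluecker_rel_def pos_choices_def[symmetric]
    by (rule order.trans[OF keys_diff Un_mono[OF order.refl keys_sum]])
  have repl: "set (J_repl k J L rs) \<subseteq> {1..n}" "set (L_repl k J L rs) \<subseteq> {1..n}"
    "length (J_repl k J L rs) = length J" "length (L_repl k J L rs) = length L"
    if "rs \<in> ?RS" for rs
  proof -
    have "k \<le> length J" using c(8) by simp
    then show "set (J_repl k J L rs) \<subseteq> {1..n}" "set (L_repl k J L rs) \<subseteq> {1..n}"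
      "length (J_repl k J L rs) = length J" "length (L_repl k J L rs) = length L"
      using c(3,4) set_J_repl_subset[OF that, of J] set_L_repl_subset[OF that]
        L_repl_facts(1)[OF that] length_J_repl by blast+
  qed
  show ?thesis
  proof (rule multihom_if_keys_mono_pair[where e="length J" and d="length L"])
    fix m assume "m \<in> Poly_Mapping.keys g"
    then consider "m \<in> Poly_Mapping.keys (pseq J * pseq L)"
      | rs where "rs \<in> ?RS" "m \<in> Poly_Mapping.keys (pseq (J_repl k J L rs) * pseq (L_repl k J L rs))"
      using keys_g by blast
    then show "\<exists>A B. m = mono_pair A B \<and> A \<subseteq> {1..n} \<and> B \<subseteq> {1..n} \<and>
        card A = length J \<and> card B = length L"
    proof cases
      case 1
      then show ?thesis using keys_pseq_mult_pseq_subset c(3,4) by blast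
    next
      case 2
      then show ?thesis using keys_pseq_mult_pseq_subset[OF 2(2) repl(1,2)[OF 2(1)]] repl(3,4)[OF 2(1)]
        by simp
    qed
  qed (use c in auto)
qed

lemma multihom_PVar: "valid_var n I \<Longrightarrow> multihom n (PVar I)"
  using A_ring_PVar[of n I] by (simp add: multihom_def PVar_def)

lemma multihom_schubert_generators:
  "g \<in> pluecker_rels n \<union> {PVar I | I. valid_var n I \<and> \<not> gale_le I (w ` {1..card I})} \<Longrightarrow>
    multihom n g"
  using multihom_pluecker_rel multihom_PVar by blast

lemma degenerate_schubert_eq_zero_set_multihom:
  "degenerate_schubert n w = zero_set n {h \<in> in_ideal n (I_schubert n w). multihom n h}"
proof (intro set_eqI iffI)
  fix x assume "x \<in> degenerate_schubert n w"
  then show "x \<in> zero_set n {h \<in> in_ideal n (I_schubert n w). multihom n h}"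
    by (simp add: degenerate_schubert_def zero_set_def)
next
  fix x assume "x \<in> zero_set n {h \<in> in_ideal n (I_schubert n w). multihom n h}"
  then have "x \<in> cone n"
    and vanish: "\<And>h. h \<in> in_ideal n (I_schubert n w) \<Longrightarrow> multihom n h \<Longrightarrow> peval x h = 0"
    by (auto simp: zero_set_def)
  let ?G = "pluecker_rels n \<union> {PVar I | I. valid_var n I \<and> \<not> gale_le I (w ` {1..card I})}"
  have gens: "\<And>g. g \<in> ?G \<Longrightarrow> multihom n g" by (rule multihom_schubert_generators)
  have "peval x h = 0" if "h \<in> in_ideal n (I_schubert n w)" for h
    using peval_in_ideal_if_multihom_vanish[OF gens] that vanish unfolding I_schubert_def by blast
  then show "x \<in> degenerate_schubert n w"
    using \<open>x \<in> cone n\<close> by (simp add: degenerate_schubert_def zero_set_def)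
qed

lemma reducible_if_product_vanishes:
  assumes "valid_var n P" "valid_var n Q"
    and product: "\<And>x. x \<in> degenerate_schubert n w \<Longrightarrow> x P * x Q = 0"
    and "\<exists>y\<in>degenerate_schubert n w. y P \<noteq> 0" "\<exists>y\<in>degenerate_schubert n w. y Q \<noteq> 0"
  shows "reducible n (degenerate_schubert n w)"
proof -
  let ?X = "degenerate_schubert n w" and ?H = "{h \<in> in_ideal n (I_schubert n w). multihom n h}"
  define Z1 where "Z1 = zero_set n (?H \<union> {PVar P})"
  define Z2 where "Z2 = zero_set n (?H \<union> {PVar Q})"
  have "zariski_closed n (zero_set n (?H \<union> {PVar I}))" if "valid_var n I" for I
    unfolding zariski_closed_def using multihom_PVar[OF that]
    by (intro exI[of _ "?H \<union> {PVar I}"]) auto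
  then have "zariski_closed n Z1" "zariski_closed n Z2"
    using assms(1,2) by (simp_all add: Z1_def Z2_def)
  moreover have "?X = Z1 \<union> Z2"
  proof
    show "?X \<subseteq> Z1 \<union> Z2"
    proof
      fix x assume x: "x \<in> ?X"
      then have "x P = 0 \<or> x Q = 0" using product by simp
      moreover have "x \<in> zero_set n ?H"
        using x degenerate_schubert_eq_zero_set_multihom by blast
      ultimately show "x \<in> Z1 \<union> Z2"
        unfolding Z1_def Z2_def zero_set_def by (auto simp: peval_PVar)
    qed
    have "zero_set n (?H \<union> F) \<subseteq> zero_set n ?H" for F
      unfolding zero_set_def by blast
    then show "Z1 \<union> Z2 \<subseteq> ?X"
      unfolding Z1_def Z2_def degenerate_schubert_eq_zero_set_multihom by blast
  qed
  moreover have "Z1 \<noteq> ?X" "Z2 \<noteq> ?X"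
    using assms(4,5) by (auto simp: Z1_def Z2_def zero_set_def peval_PVar)
  ultimately show ?thesis unfolding reducible_def by blast
qed

section \<open>The three-term Pluecker relation\<close>

lemma pos_choices_one: "pos_choices 1 d = (\<lambda>r. [r]) ` {..<d}"
proof
  show "pos_choices 1 d \<subseteq> (\<lambda>r. [r]) ` {..<d}"
  proof
    fix rs assume "rs \<in> pos_choices 1 d"
    then have "length rs = 1" "set rs \<subseteq> {..<d}" by (auto simp: pos_choices_def)
    then obtain r where "rs = [r]" by (metis One_nat_def length_0_conv length_Suc_conv)
    then show "rs \<in> (\<lambda>r. [r]) ` {..<d}" using \<open>set rs \<subseteq> {..<d}\<close> by auto
  qed
qed (auto simp: pos_choices_def)

lemma pluecker_rel_three_term:
  assumes "distinct (a # b # c # S)"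
  shows "pluecker_rel 1 (a # S) (b # c # S) =
    pseq (a # S) * pseq (b # c # S) - pseq (b # S) * pseq (a # c # S) - pseq (c # S) * pseq (b # a # S)"
proof -
  let ?J = "a # S" and ?L = "b # c # S"
  define g where "g r = pseq (J_repl 1 ?J ?L [r]) * pseq (L_repl 1 ?J ?L [r])" for r
  have J_repl: "J_repl 1 ?J ?L [r] = (?L ! r) # S" for r by (simp add: J_repl_def)
  have L_repl: "L_repl 1 ?J ?L [r] = ?L[r := a]" for r by (simp add: L_repl_def)
  have "(\<Sum>rs\<in>pos_choices 1 (length ?L). pseq (J_repl 1 ?J ?L rs) * pseq (L_repl 1 ?J ?L rs)) =
      (\<Sum>r<length ?L. g r)"
    unfolding pos_choices_one g_def by (subst sum.reindex) (auto simp: inj_on_def)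
  also have "\<dots> = g 0 + (g 1 + (\<Sum>r<length S. g (Suc (Suc r))))"
    by (simp only: length_Cons sum.lessThan_Suc_shift One_nat_def)
  also have "(\<Sum>r<length S. g (Suc (Suc r))) = 0"
    unfolding g_def J_repl by (intro sum.neutral) (auto simp: pseq_def)
  also have "g 0 = pseq (b # S) * pseq (a # c # S)" unfolding g_def J_repl L_repl by simp
  also have "g 1 = pseq (c # S) * pseq (b # a # S)" unfolding g_def J_repl L_repl by simp
  finally show ?thesis
    unfolding pluecker_rel_def pos_choices_def[symmetric] by (simp add: algebra_simps)
qed

lemma pluecker_rel_in_I_schubert:
  assumes "distinct (a # b # c # S)" "set (a # b # c # S) \<subseteq> {1..n}" "length S + 2 \<le> n - 1"
  shows "pluecker_rel 1 (a # S) (b # c # S) \<in> I_schubert n w"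
  unfolding I_schubert_def
proof (intro ideal_gen_generator UnI1)
  show "pluecker_rel 1 (a # S) (b # c # S) \<in> pluecker_rels n"
    unfolding pluecker_rels_def using assms
    by (intro CollectI exI[of _ 1] exI[of _ "a # S"] exI[of _ "b # c # S"]) auto
qed

lemma single_mono_pair_top_in_I_schubert:
  assumes w: "w \<circ> simple_refl i = w0 n" and i: "1 \<le> i" "i < n" and N: "valid_var n N"
  shows "Poly_Mapping.single (mono_pair {n-i+1..n} N) u \<in> I_schubert n w"
proof -
  let ?M = "{n-i+1..n}"
  have "valid_var n ?M" using i by (auto simp: valid_var_def)
  then have "PVar ?M \<in> I_schubert n w"
    unfolding I_schubert_def using not_gale_le_w_image[OF w i] by (intro ideal_gen_generator) blast
  then have "Poly_Mapping.single (Poly_Mapping.single N 1) u * PVar ?M \<in> I_schubert n w"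
    unfolding I_schubert_def using N
    by (intro ideal_gen_mult_left) (auto intro!: A_ring_single simp: valid_mono_def)
  then show ?thesis
    by (simp add: PVar_def mult_single mono_pair_def add.commute)
qed

lemma in_w_two_terms:
  assumes "mA \<noteq> mB" "uA \<noteq> 0" "uB \<noteq> 0" "wt_mono n mA < wt_mono n mB"
  shows "in_w n (Poly_Mapping.single mA uA + Poly_Mapping.single mB uB) = Poly_Mapping.single mA uA"
proof -
  let ?f = "Poly_Mapping.single mA uA + Poly_Mapping.single mB uB"
  have lookup: "Poly_Mapping.lookup ?f m = (if m = mA then uA else if m = mB then uB else 0)" for m
    using assms(1) by (simp add: lookup_add lookup_single when_def)
  then have "Poly_Mapping.keys ?f = {mA, mB}"
    using assms(2,3) by (auto simp: in_keys_iff split: if_splits)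
  then have "Min (wt_mono n ` Poly_Mapping.keys ?f) = wt_mono n mA" using assms(4) by simp
  then show ?thesis unfolding in_w_eq_filter_monos
    by (intro poly_mapping_eqI) (use assms(4) in \<open>auto simp: lookup_filter_monos lookup lookup_single when_def\<close>)
qed

lemma eval_mono_vanishes_on_degenerate_schubert:
  assumes "Poly_Mapping.single mA uA + Poly_Mapping.single mB uB + C \<in> I_schubert n w"
    and "C \<in> I_schubert n w"
    and "mA \<noteq> mB" "uA \<noteq> 0" "uB \<noteq> 0" "wt_mono n mA < wt_mono n mB"
    and x: "x \<in> degenerate_schubert n w"
  shows "eval_mono x mA = 0"
proof -
  have "Poly_Mapping.single mA uA + Poly_Mapping.single mB uB \<in> I_schubert n w"
    using ideal_gen_diff[OF assms(1,2)[unfolded I_schubert_def]] by (simp add: I_schubert_def)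
  then have "Poly_Mapping.single mA uA \<in> in_ideal n (I_schubert n w)"
    unfolding in_ideal_def using in_w_two_terms[OF assms(3-6)]
    by (intro ideal_gen_generator) (metis image_eqI)
  then have "peval x (Poly_Mapping.single mA uA) = 0"
    using x by (simp add: degenerate_schubert_def zero_set_def)
  then show ?thesis using assms(4) by (simp add: peval_single)
qed

lemma card_filter_insert:
  assumes "finite X" "c \<notin> X"
  shows "card {x \<in> insert c X. P x} = card {x \<in> X. P x} + of_bool (P c)"
proof -
  have "{x \<in> insert c X. P x} = (if P c then insert c {x \<in> X. P x} else {x \<in> X. P x})"
    by auto
  then show ?thesis using assms by simp
qed

lemma wt_var_insert:
  assumes "finite X" "a \<notin> X"
  shows "wt_var n (insert a X) =
    card {x \<in> X. Suc (card X) \<le> x \<and> x \<le> n - 1} + of_bool (Suc (card X) \<le> a \<and> a \<le> n - 1)"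
  unfolding wt_var_def card_insert_disjoint[OF assms] card_filter_insert[OF assms] ..

text \<open>All contributions of \<open>S\<close> and of \<open>c\<close> cancel; only the positions of \<open>a\<close> and \<open>b\<close> relative
  to \<open>|S| + 1\<close> and \<open>|S| + 2\<close> matter.\<close>

lemma wt_three_term_less:
  assumes "distinct (a # b # c # S)"
    and "of_bool (length S + 1 \<le> a \<and> a \<le> n - 1) + of_bool (length S + 2 \<le> b \<and> b \<le> n - 1) <
         (of_bool (length S + 1 \<le> b \<and> b \<le> n - 1) + of_bool (length S + 2 \<le> a \<and> a \<le> n - 1) :: nat)"
  shows "wt_mono n (mono_pair (set (a # S)) (set (b # c # S))) <
         wt_mono n (mono_pair (set (b # S)) (set (a # c # S)))"
proof -
  let ?S = "set S" and ?s = "length S"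
  let ?ind = "\<lambda>t x. of_bool (t \<le> x \<and> x \<le> n - 1) :: nat"
  define C1 where "C1 = card {x \<in> ?S. Suc ?s \<le> x \<and> x \<le> n - 1}"
  define C2 where "C2 = card {x \<in> ?S. Suc (Suc ?s) \<le> x \<and> x \<le> n - 1}"
  have card: "card ?S = ?s" "card (insert c ?S) = Suc ?s"
    using assms(1) by (simp_all add: distinct_card)
  have wt1: "wt_var n (insert x ?S) = C1 + ?ind (?s + 1) x" if "x \<notin> ?S" for x
    using wt_var_insert[OF finite_set that] card by (simp add: C1_def)
  have wt2: "wt_var n (insert x (insert c ?S)) = C2 + ?ind (?s + 2) c + ?ind (?s + 2) x"
    if "x \<notin> ?S" "x \<noteq> c" for x
    using wt_var_insert[of "insert c ?S" x n] card_filter_insert[of ?S c] assms(1) that card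
    by (simp add: C2_def)
  have "set (x # S) \<noteq> set (y # c # S)" if "y \<notin> ?S" "y \<noteq> c" "c \<notin> ?S" for x y
  proof
    assume "set (x # S) = set (y # c # S)"
    then have "card (set (x # S)) = card (set (y # c # S))" by simp
    then show False using that card by (simp add: card_insert_if split: if_splits)
  qed
  then have "set (a # S) \<noteq> set (b # c # S)" "set (b # S) \<noteq> set (a # c # S)"
    using assms(1) by auto
  then show ?thesis
    using assms(1,2) by (simp add: wt_mono_pair wt1 wt2)
qed

text \<open>The hypothesis \<open>top\<close> makes the third term \<open>p_{cS} p_{abS}\<close> of the relation a multiple
  of \<open>p_M\<close>, hence an element of \<open>I_w\<close>.\<close>

lemma three_term_product_vanishes:
  assumes w: "w \<circ> simple_refl i = w0 n" and i: "1 \<le> i" "i < n"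
    and abcS: "distinct (a # b # c # S)" "set (a # b # c # S) \<subseteq> {1..n}" "length S + 2 \<le> n - 1"
    and top: "{n-i+1..n} = set (c # S) \<or> {n-i+1..n} = set (a # b # S)"
    and less: "wt_mono n (mono_pair (set (a # S)) (set (b # c # S))) <
               wt_mono n (mono_pair (set (b # S)) (set (a # c # S)))"
    and x: "x \<in> degenerate_schubert n w"
  shows "x (set (a # S)) * x (set (b # c # S)) = 0"
proof -
  let ?u = "\<lambda>X Y. list_sign X * list_sign Y"
  have distinct: "distinct (a # S)" "distinct (b # c # S)" "distinct (b # S)" "distinct (a # c # S)"
    "distinct (c # S)" "distinct (b # a # S)"
    using abcS(1) by auto
  have neq: "set (a # S) \<noteq> set (b # c # S)" "set (a # S) \<noteq> set (b # S)" "set (a # S) \<noteq> set (a # c # S)"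
    using abcS(1) by auto
  have "valid_var n (set (c # S))" "valid_var n (set (b # a # S))"
    using abcS distinct by (auto simp: valid_var_def distinct_card)
  moreover have "{n-i+1..n} = set (c # S) \<or> {n-i+1..n} = set (b # a # S)"
    using top by auto
  ultimately have C: "Poly_Mapping.single (mono_pair (set (c # S)) (set (b # a # S)))
      (- ?u (c # S) (b # a # S)) \<in> I_schubert n w"
    using single_mono_pair_top_in_I_schubert[OF w i] by (metis mono_pair_comm)
  have "pluecker_rel 1 (a # S) (b # c # S) =
        Poly_Mapping.single (mono_pair (set (a # S)) (set (b # c # S))) (?u (a # S) (b # c # S)) +
        Poly_Mapping.single (mono_pair (set (b # S)) (set (a # c # S))) (- ?u (b # S) (a # c # S)) +
        Poly_Mapping.single (mono_pair (set (c # S)) (set (b # a # S))) (- ?u (c # S) (b # a # S))"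
    unfolding pluecker_rel_three_term[OF abcS(1)] using distinct by (simp add: pseq_mult_pseq single_uminus)
  with pluecker_rel_in_I_schubert[OF abcS, of w]
  have "Poly_Mapping.single (mono_pair (set (a # S)) (set (b # c # S))) (?u (a # S) (b # c # S)) +
        Poly_Mapping.single (mono_pair (set (b # S)) (set (a # c # S))) (- ?u (b # S) (a # c # S)) +
        Poly_Mapping.single (mono_pair (set (c # S)) (set (b # a # S))) (- ?u (c # S) (b # a # S))
      \<in> I_schubert n w" by simp
  from eval_mono_vanishes_on_degenerate_schubert[OF this C _ _ _ less x]
  show ?thesis
    using neq by (simp add: eval_mono_pair mono_pair_neq list_sign_nonzero)
qed

lemma reducible_from_three_term:
  assumes w: "w \<circ> simple_refl i = w0 n" and i: "1 \<le> i" "i < n"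
    and abcS: "distinct (a # b # c # S)" "set (a # b # c # S) \<subseteq> {1..n}" "length S + 2 \<le> n - 1"
    and top: "{n-i+1..n} = set (c # S) \<or> {n-i+1..n} = set (a # b # S)"
    and less: "of_bool (length S + 1 \<le> a \<and> a \<le> n - 1) + of_bool (length S + 2 \<le> b \<and> b \<le> n - 1) <
         (of_bool (length S + 1 \<le> b \<and> b \<le> n - 1) + of_bool (length S + 2 \<le> a \<and> a \<le> n - 1) :: nat)"
    and xs: "distinct xs" "set xs \<subseteq> {1..n}" "\<not> set (take i xs) \<subseteq> {n-i+1..n}"
      "length S + 1 \<le> length xs" "set (take (length S + 1) xs) = set (a # S)"
    and ys: "distinct ys" "set ys \<subseteq> {1..n}" "\<not> set (take i ys) \<subseteq> {n-i+1..n}"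
      "length S + 2 \<le> length ys" "set (take (length S + 2) ys) = set (b # c # S)"
  shows "reducible n (degenerate_schubert n w)"
proof (rule reducible_if_product_vanishes)
  show "valid_var n (set (a # S))" "valid_var n (set (b # c # S))"
    using abcS by (auto simp: valid_var_def distinct_card)
  show "x (set (a # S)) * x (set (b # c # S)) = 0" if "x \<in> degenerate_schubert n w" for x
    using three_term_product_vanishes[OF w i abcS top wt_three_term_less[OF abcS(1) less] that] .
  show "\<exists>x\<in>degenerate_schubert n w. x (set (a # S)) \<noteq> 0"
    using exists_degenerate_schubert_point_nonzero[OF w i xs(1-3), of "length S + 1"] xs(4,5) abcS(3)
    by simp
  show "\<exists>x\<in>degenerate_schubert n w. x (set (b # c # S)) \<noteq> 0"
    using exists_degenerate_schubert_point_nonzero[OF w i ys(1-3), of "length S + 2"] ys(4,5) abcS(3)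
    by simp
qed

lemma reducible_degenerate_schubert_i_eq_1:
  assumes w: "w \<circ> simple_refl 1 = w0 n" and n: "n > 2"
  shows "reducible n (degenerate_schubert n w)"
  by (rule reducible_from_three_term[OF w, where a=2 and b=1 and c=n and S="[]" and xs="[2]"
        and ys="[1, n]"])
    (use n in auto)

lemma reducible_degenerate_schubert_small_i:
  assumes w: "w \<circ> simple_refl i = w0 n" and i: "2 \<le> i" "2 * i \<le> n"
  shows "reducible n (degenerate_schubert n w)"
proof -
  define S where "S = [n-i+1..<n]"
  have S: "length S = i - 1" "set S = {n-i+1..<n}" using i by (simp_all add: S_def)
  show ?thesis
  proof (rule reducible_from_three_term[OF w, where a=1 and b=i and c=n and S=S and xs="1 # S"
        and ys="i # n # S"])
    show "{n-i+1..n} = set (n # S) \<or> {n-i+1..n} = set (1 # i # S)"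
      using i by (auto simp: S)
    show "set (take (length S + 1) (1 # S)) = set (1 # S)"
      "set (take (length S + 2) (i # n # S)) = set (i # n # S)"
      by simp_all
    show "\<not> set (take i (i # n # S)) \<subseteq> {n-i+1..n}"
      using i by (cases i) auto
  qed (use i in \<open>auto simp: S S_def\<close>)
qed

lemma reducible_degenerate_schubert_large_i:
  assumes w: "w \<circ> simple_refl i = w0 n" and i: "n + 2 \<le> 2 * i" "i < n"
  shows "reducible n (degenerate_schubert n w)"
proof -
  define S where "S = [n-i+1..<i-1] @ [i..<n]"
  have S: "length S = i - 2" "set S = {n-i+1..<i-1} \<union> {i..<n}" using i by (simp_all add: S_def)
  show ?thesis
  proof (rule reducible_from_three_term[OF w, where a=n and b="i - 1" and c=1 and S=S
        and xs="n # S @ [1]" and ys="(i - 1) # 1 # S"])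
    show "{n-i+1..n} = set (1 # S) \<or> {n-i+1..n} = set (n # (i - 1) # S)"
      using i by (auto simp: S)
    show "set (take (length S + 1) (n # S @ [1])) = set (n # S)"
      "set (take (length S + 2) ((i - 1) # 1 # S)) = set ((i - 1) # 1 # S)"
      by simp_all
    show "\<not> set (take i (n # S @ [1])) \<subseteq> {n-i+1..n}" "\<not> set (take i ((i - 1) # 1 # S)) \<subseteq> {n-i+1..n}"
      using i S(1) by auto
  qed (use i in \<open>auto simp: S S_def\<close>)
qed

theorem theorem6p1:
  fixes n i :: nat and w :: "nat \<Rightarrow> nat"
  assumes "n > 2"
    and "i \<in> {1..n-1}"
    and "w permutes {1..n}"
    and "w \<circ> simple_refl i = w0 n"
    and "odd n \<Longrightarrow> i \<noteq> (n + 1) div 2"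
  shows "reducible n (degenerate_schubert n w)"
proof -
  have "i \<noteq> 0" "i < n" using assms(1,2) by auto
  then consider "i = 1" | "2 \<le> i" "2 * i \<le> n" | "n + 2 \<le> 2 * i" | "2 * i = n + 1"
    by linarith
  then show ?thesis
  proof cases
    case 1
    then show ?thesis using reducible_degenerate_schubert_i_eq_1 assms(1,4) by simp
  next
    case 2
    then show ?thesis using reducible_degenerate_schubert_small_i[OF assms(4)] by simp
  next
    case 3
    then show ?thesis using reducible_degenerate_schubert_large_i[OF assms(4) _ \<open>i < n\<close>] by simp
  next
    case 4
    then show ?thesis using assms(5) by presburger
  qed
qed

end
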